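(* Let $(A,\Delta)$ be a regular multiplier Hopf algebra acting on an algebra $R$ (so $R$ is a left $A$-module algebra), and suppose the action is inner: there is a unital homomorphism $\gamma:A\to M(R)$ such that $ax=\sum\gamma(a_{(1)})\,x\,\gamma(S(a_{(2)}))$ for all $a\in A$, $x\in R$. Then the smash product $R\# A$ is isomorphic, as an algebra, to the tensor product algebra $R\otimes A$ (with the usual componentwise product).
   Context: Algebras are over $\mathbb C$, possibly without identity, with non-degenerate product; $M(\cdot)$ is the multiplier algebra. A regular multiplier Hopf algebra is a pair $(A,\Delta)$ with $\Delta:A\to M(A\otimes A)$ a coassociative homomorphism such that $\Delta(a)(1\otimes b),(a\otimes 1)\Delta(b),\Delta(a)(b\otimes 1),(1\otimes a)\Delta(b)\in A\otimes A$, the maps $a\otimes b\mapsto\Delta(a)(1\otimes b)$, $a\otimes b\mapsto(a\otimes 1)\Delta(b)$ are bijective, and likewise for the flipped comultiplication; it has counit $\varepsilon$ and bijective antipode $S$; Sweedler notation is used with legs covered. A left $A$-module algebra is an algebra $R$ with non-degenerate product which is a unital left $A$-module ($AR=R$) with $a(xx')=\sum(a_{(1)}x)(a_{(2)}x')$. A homomorphism $\gamma:A\to M(R)$ is unital if $\gamma(A)R=R\gamma(A)=R$ (spans of products); then each $x\in R$ equals $\gamma(e)x$ for some $e\in A$, which covers $a_{(1)}$ in the formula for innerness. The smash product $R\# A$ is $R\otimes A$ with product $(x\# a)(x'\# a')=\sum x(a_{(1)}x')\# a_{(2)}a'$. *)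

theory Defs
  imports Complex_Main
begin

class cvec = ab_group_add +
  fixes scaleC :: "complex \<Rightarrow> 'a \<Rightarrow> 'a"  (infixr \<open>*\<^sub>C\<close> 75)
  assumes scaleC_add_right: "c *\<^sub>C (x + y) = c *\<^sub>C x + c *\<^sub>C y"
    and scaleC_add_left: "(c + d) *\<^sub>C x = c *\<^sub>C x + d *\<^sub>C x"
    and scaleC_scaleC: "c *\<^sub>C (d *\<^sub>C x) = (c * d) *\<^sub>C x"
    and scaleC_one: "1 *\<^sub>C x = x"

text \<open>An associative algebra over the complex numbers, not necessarily with identity
  (the class ring of HOL does not require a unit).\<close>
class calg = cvec + ring +
  assumes scaleC_mult_left: "(c *\<^sub>C x) * y = c *\<^sub>C (x * y)"
    and scaleC_mult_right: "x * (c *\<^sub>C y) = c *\<^sub>C (x * y)"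

instantiation complex :: cvec
begin
definition scaleC_complex :: "complex \<Rightarrow> complex \<Rightarrow> complex" where
  "scaleC_complex c x = c * x"
instance by standard (auto simp: scaleC_complex_def algebra_simps)
end

definition clinear :: "('a::cvec \<Rightarrow> 'b::cvec) \<Rightarrow> bool" where
  "clinear f \<longleftrightarrow> (\<forall>x y. f (x + y) = f x + f y) \<and> (\<forall>c x. f (c *\<^sub>C x) = c *\<^sub>C f x)"

definition nondegenerate :: "('a \<Rightarrow> 'a \<Rightarrow> 'a::zero) \<Rightarrow> bool" where
  "nondegenerate mul \<longleftrightarrow>
     (\<forall>x. (\<forall>y. mul x y = 0) \<longrightarrow> x = 0) \<and> (\<forall>x. (\<forall>y. mul y x = 0) \<longrightarrow> x = 0)"

text \<open>Standard construction: formal finite linear combinations of pairs, modulo the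
  complex span of the bilinearity relations.\<close>

definition fv :: "(complex \<times> 'a \<times> 'b) list \<Rightarrow> ('a \<times> 'b) \<Rightarrow> complex" where
  "fv xs p = (\<Sum>(c, q)\<leftarrow>xs. if q = p then c else 0)"

definition ind :: "'a \<Rightarrow> 'a \<Rightarrow> complex" where
  "ind q p = (if p = q then 1 else 0)"

inductive trel :: "(('a::cvec \<times> 'b::cvec) \<Rightarrow> complex) \<Rightarrow> bool" where
  zero: "trel (\<lambda>_. 0)"
| add: "trel f \<Longrightarrow> trel g \<Longrightarrow> trel (\<lambda>p. f p + g p)"
| scale: "trel f \<Longrightarrow> trel (\<lambda>p. c * f p)"
| lin_left: "trel (\<lambda>p. ind (x + x', y) p - ind (x, y) p - ind (x', y) p)"
| lin_right: "trel (\<lambda>p. ind (x, y + y') p - ind (x, y) p - ind (x, y') p)"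
| hom_left: "trel (\<lambda>p. ind (c *\<^sub>C x, y) p - c * ind (x, y) p)"
| hom_right: "trel (\<lambda>p. ind (x, c *\<^sub>C y) p - c * ind (x, y) p)"

definition tequiv :: "(complex \<times> 'a::cvec \<times> 'b::cvec) list \<Rightarrow> (complex \<times> 'a \<times> 'b) list \<Rightarrow> bool" where
  "tequiv xs ys \<longleftrightarrow> trel (\<lambda>p. fv xs p - fv ys p)"

lemma trel_cong: "trel f \<Longrightarrow> f = g \<Longrightarrow> trel g" by simp

lemma fv_append: "fv (xs @ ys) p = fv xs p + fv ys p"
  by (simp add: fv_def)

lemma fv_Nil: "fv [] p = 0" by (simp add: fv_def)

lemma fv_scale: "fv (map (\<lambda>(d, q). (c * d, q)) xs) p = c * fv xs p"
  by (induction xs) (auto simp: fv_def algebra_simps)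

lemma fv_scale': "fv (map (\<lambda>(d, q). (d * c, q)) xs) p = c * fv xs p"
  by (induction xs) (auto simp: fv_def algebra_simps)

lemma fv_neg: "fv (map (\<lambda>(d, q). (- d, q)) xs) p = - fv xs p"
  by (induction xs) (auto simp: fv_def algebra_simps)

lemma fv_scale2: "fv (map (\<lambda>(d, q). (x * d + y * d, q)) xs) p = x * fv xs p + y * fv xs p"
  by (induction xs) (auto simp: fv_def algebra_simps)

lemma fv_scale3: "fv (map ((\<lambda>(d, q). (x * d, q)) \<circ> (\<lambda>(d, q). (y * d, q))) xs) p = x * y * fv xs p"
  by (induction xs) (auto simp: fv_def algebra_simps)

lemma tequiv_fv: "(\<And>p. fv xs p = fv ys p) \<Longrightarrow> tequiv xs ys"
  unfolding tequiv_def by (rule trel_cong[OF trel.zero]) auto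

lemma equivp_tequiv: "equivp tequiv"
proof (rule equivpI)
  show "reflp tequiv" by (auto intro: reflpI tequiv_fv)
  show "symp tequiv"
  proof (rule sympI)
    fix xs ys assume "tequiv xs ys"
    then have "trel (\<lambda>p. (-1) * (fv xs p - fv ys p))" unfolding tequiv_def by (rule trel.scale)
    then show "tequiv ys xs" unfolding tequiv_def by (rule trel_cong) auto
  qed
  show "transp tequiv"
  proof (rule transpI)
    fix xs ys zs assume "tequiv xs ys" "tequiv ys zs"
    then have "trel (\<lambda>p. (fv xs p - fv ys p) + (fv ys p - fv zs p))"
      unfolding tequiv_def by (rule trel.add)
    then show "tequiv xs zs" unfolding tequiv_def by (rule trel_cong) auto
  qed
qed

quotient_type (overloaded) ('a, 'b) tensor = "(complex \<times> 'a::cvec \<times> 'b::cvec) list" / tequiv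
  by (rule equivp_tequiv)

instantiation tensor :: (cvec, cvec) cvec
begin

lift_definition zero_tensor :: "('a, 'b) tensor" is "[]" .

lift_definition plus_tensor :: "('a, 'b) tensor \<Rightarrow> ('a, 'b) tensor \<Rightarrow> ('a, 'b) tensor"
  is "(@)"
proof -
  fix xs xs' ys ys' :: "(complex \<times> 'a \<times> 'b) list"
  assume "tequiv xs xs'" "tequiv ys ys'"
  then have "trel (\<lambda>p. (fv xs p - fv xs' p) + (fv ys p - fv ys' p))"
    unfolding tequiv_def by (rule trel.add)
  then show "tequiv (xs @ ys) (xs' @ ys')"
    unfolding tequiv_def by (rule trel_cong) (auto simp: fv_append)
qed

lift_definition scaleC_tensor :: "complex \<Rightarrow> ('a, 'b) tensor \<Rightarrow> ('a, 'b) tensor"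
  is "\<lambda>c. map (\<lambda>(d, q). (c * d, q))"
proof -
  fix c and xs xs' :: "(complex \<times> 'a \<times> 'b) list"
  assume "tequiv xs xs'"
  then have "trel (\<lambda>p. c * (fv xs p - fv xs' p))"
    unfolding tequiv_def by (rule trel.scale)
  then show "tequiv (map (\<lambda>(d, q). (c * d, q)) xs) (map (\<lambda>(d, q). (c * d, q)) xs')"
    unfolding tequiv_def by (rule trel_cong) (auto simp: fv_scale fv_scale' algebra_simps)
qed

definition uminus_tensor :: "('a, 'b) tensor \<Rightarrow> ('a, 'b) tensor" where
  "uminus_tensor t = (-1) *\<^sub>C t"

definition minus_tensor :: "('a, 'b) tensor \<Rightarrow> ('a, 'b) tensor \<Rightarrow> ('a, 'b) tensor" where
  "minus_tensor s t = s + (-1) *\<^sub>C t"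

instance
proof
  fix a b c :: "('a, 'b) tensor" and x y :: complex
  show "a + b + c = a + (b + c)"
    by transfer (rule tequiv_fv, simp add: fv_append)
  show "a + b = b + a"
    by transfer (rule tequiv_fv, simp add: fv_append)
  show "0 + a = a"
    by transfer (rule tequiv_fv, simp add: fv_append fv_Nil)
  show "- a + a = 0"
    unfolding uminus_tensor_def
    by transfer (rule tequiv_fv, simp add: fv_append fv_Nil fv_scale fv_scale' fv_neg)
  show "a - b = a + - b"
    unfolding uminus_tensor_def minus_tensor_def ..
  show "x *\<^sub>C (a + b) = x *\<^sub>C a + x *\<^sub>C b"
    by transfer (rule tequiv_fv, simp add: fv_append fv_scale)
  show "(x + y) *\<^sub>C a = x *\<^sub>C a + y *\<^sub>C a"
    by transfer (rule tequiv_fv, simp add: fv_append fv_scale fv_scale2 algebra_simps)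
  show "x *\<^sub>C (y *\<^sub>C a) = (x * y) *\<^sub>C a"
    by transfer (rule tequiv_fv, simp add: fv_scale3 fv_scale)
  show "1 *\<^sub>C a = a"
    by transfer (rule tequiv_fv, simp add: fv_scale)
qed

end

text \<open>The map
  \<open>tlift \<phi>\<close> sends \<open>x \<otimes> y\<close> to \<open>\<phi> x y\<close>; it is well defined whenever \<open>\<phi>\<close> is bilinear
  (it is computed on an arbitrary representative).\<close>

definition tens :: "'a::cvec \<Rightarrow> 'b::cvec \<Rightarrow> ('a, 'b) tensor"  (infixr \<open>\<otimes>\<close> 80) where
  "x \<otimes> y = abs_tensor [(1, x, y)]"

definition tlift :: "('a::cvec \<Rightarrow> 'b::cvec \<Rightarrow> 'c::cvec) \<Rightarrow> ('a, 'b) tensor \<Rightarrow> 'c" where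
  "tlift \<phi> t = (\<Sum>(c, x, y)\<leftarrow>rep_tensor t. c *\<^sub>C \<phi> x y)"

definition tmap :: "('a::cvec \<Rightarrow> 'c::cvec) \<Rightarrow> ('b::cvec \<Rightarrow> 'd::cvec) \<Rightarrow> ('a, 'b) tensor \<Rightarrow> ('c, 'd) tensor" where
  "tmap f g = tlift (\<lambda>x y. f x \<otimes> g y)"

definition tflip :: "('a::cvec, 'b::cvec) tensor \<Rightarrow> ('b, 'a) tensor" where
  "tflip = tlift (\<lambda>x y. y \<otimes> x)"

definition tmul :: "('a::calg, 'b::calg) tensor \<Rightarrow> ('a, 'b) tensor \<Rightarrow> ('a, 'b) tensor" where
  "tmul s t = tlift (\<lambda>x y. tlift (\<lambda>x' y'. (x * x') \<otimes> (y * y')) t) s"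

definition tassoc :: "('a::cvec, ('b::cvec, 'c::cvec) tensor) tensor \<Rightarrow> (('a, 'b) tensor, 'c) tensor" where
  "tassoc = tlift (\<lambda>x u. tlift (\<lambda>y z. (x \<otimes> y) \<otimes> z) u)"

text \<open>A multiplier of an algebra with product \<open>mul\<close> is a pair \<open>(L, R)\<close> of maps
  (left and right multiplication by the multiplier: \<open>L y = m y\<close>, \<open>R x = x m\<close>)
  with \<open>L (x y) = (L x) y\<close>, \<open>R (x y) = x (R y)\<close> and \<open>(R x) y = x (L y)\<close>
  (double centralizers).\<close>

type_synonym 'b mult = "('b \<Rightarrow> 'b) \<times> ('b \<Rightarrow> 'b)"

definition is_mult :: "('b \<Rightarrow> 'b \<Rightarrow> 'b) \<Rightarrow> 'b mult \<Rightarrow> bool" where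
  "is_mult mul m \<longleftrightarrow>
     (\<forall>x y. fst m (mul x y) = mul (fst m x) y) \<and>
     (\<forall>x y. snd m (mul x y) = mul x (snd m y)) \<and>
     (\<forall>x y. mul (snd m x) y = mul x (fst m y))"

definition mcomp :: "'b mult \<Rightarrow> 'b mult \<Rightarrow> 'b mult" where
  "mcomp m m' = (fst m \<circ> fst m', snd m' \<circ> snd m)"

definition madd :: "'b::plus mult \<Rightarrow> 'b mult \<Rightarrow> 'b mult" where
  "madd m m' = ((\<lambda>y. fst m y + fst m' y), (\<lambda>x. snd m x + snd m' x))"

definition mscale :: "complex \<Rightarrow> 'b::cvec mult \<Rightarrow> 'b mult" where
  "mscale c m = ((\<lambda>y. c *\<^sub>C fst m y), (\<lambda>x. c *\<^sub>C snd m x))"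

definition memb :: "('b \<Rightarrow> 'b \<Rightarrow> 'b) \<Rightarrow> 'b \<Rightarrow> 'b mult" where
  "memb mul b = (mul b, \<lambda>x. mul x b)"

definition in_alg :: "('b \<Rightarrow> 'b \<Rightarrow> 'b) \<Rightarrow> 'b mult \<Rightarrow> bool" where
  "in_alg mul m \<longleftrightarrow> (\<exists>t. m = memb mul t)"

definition the_elem :: "('b \<Rightarrow> 'b \<Rightarrow> 'b) \<Rightarrow> 'b mult \<Rightarrow> 'b" where
  "the_elem mul m = (THE t. m = memb mul t)"

definition hom_to_mult :: "('b \<Rightarrow> 'b \<Rightarrow> 'b) \<Rightarrow> ('a::calg \<Rightarrow> 'b::cvec mult) \<Rightarrow> bool" where
  "hom_to_mult mul h \<longleftrightarrow> (\<forall>a. is_mult mul (h a)) \<and>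
     (\<forall>a b. h (a + b) = madd (h a) (h b)) \<and> (\<forall>c a. h (c *\<^sub>C a) = mscale c (h a)) \<and>
     (\<forall>a b. h (a * b) = mcomp (h a) (h b))"

definition one_tens :: "'a::calg \<Rightarrow> ('a, 'a) tensor mult" where
  "one_tens b = (tmap id (\<lambda>y. b * y), tmap id (\<lambda>y. y * b))"

definition tens_one :: "'a::calg \<Rightarrow> ('a, 'a) tensor mult" where
  "tens_one b = (tmap (\<lambda>y. b * y) id, tmap (\<lambda>y. y * b) id)"

definition D1 :: "('a::calg \<Rightarrow> ('a, 'a) tensor mult) \<Rightarrow> 'a \<Rightarrow> 'a \<Rightarrow> ('a, 'a) tensor" where
  "D1 \<Delta> a b = the_elem tmul (mcomp (\<Delta> a) (one_tens b))"

definition D2 :: "('a::calg \<Rightarrow> ('a, 'a) tensor mult) \<Rightarrow> 'a \<Rightarrow> 'a \<Rightarrow> ('a, 'a) tensor" where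
  "D2 \<Delta> a b = the_elem tmul (mcomp (tens_one a) (\<Delta> b))"

definition D3 :: "('a::calg \<Rightarrow> ('a, 'a) tensor mult) \<Rightarrow> 'a \<Rightarrow> 'a \<Rightarrow> ('a, 'a) tensor" where
  "D3 \<Delta> a b = the_elem tmul (mcomp (\<Delta> a) (tens_one b))"

definition D4 :: "('a::calg \<Rightarrow> ('a, 'a) tensor mult) \<Rightarrow> 'a \<Rightarrow> 'a \<Rightarrow> ('a, 'a) tensor" where
  "D4 \<Delta> a b = the_elem tmul (mcomp (one_tens a) (\<Delta> b))"

definition regular_mult_hopf :: "('a::calg \<Rightarrow> ('a, 'a) tensor mult) \<Rightarrow> bool" where
  "regular_mult_hopf \<Delta> \<longleftrightarrow>
     nondegenerate ((*) :: 'a \<Rightarrow> 'a \<Rightarrow> 'a) \<and>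
     hom_to_mult tmul \<Delta> \<and>
     (\<forall>a b. in_alg tmul (mcomp (\<Delta> a) (one_tens b)) \<and> in_alg tmul (mcomp (tens_one a) (\<Delta> b)) \<and>
            in_alg tmul (mcomp (\<Delta> a) (tens_one b)) \<and> in_alg tmul (mcomp (one_tens a) (\<Delta> b))) \<and>
     \<comment> \<open>coassociativity \<open>(a \<otimes> 1 \<otimes> 1)(\<Delta> \<otimes> \<iota>)(\<Delta>(b)(1 \<otimes> c)) = (\<iota> \<otimes> \<Delta>)((a \<otimes> 1)\<Delta>(b))(1 \<otimes> 1 \<otimes> c)\<close>\<close>
     (\<forall>a b c. tlift (\<lambda>p q. D2 \<Delta> a p \<otimes> q) (D1 \<Delta> b c) =
              tassoc (tlift (\<lambda>u v. u \<otimes> D1 \<Delta> v c) (D2 \<Delta> a b))) \<and>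
     \<comment> \<open>\<open>a \<otimes> b \<mapsto> \<Delta>(a)(1 \<otimes> b)\<close> and \<open>a \<otimes> b \<mapsto> (a \<otimes> 1)\<Delta>(b)\<close> are bijective\<close>
     bij (tlift (D1 \<Delta>)) \<and> bij (tlift (D2 \<Delta>)) \<and>
     \<comment> \<open>likewise for the flipped comultiplication: \<open>\<Delta>\<^sup>o\<^sup>p(a)(1 \<otimes> b) = \<sigma>(\<Delta>(a)(b \<otimes> 1))\<close>,
         \<open>(a \<otimes> 1)\<Delta>\<^sup>o\<^sup>p(b) = \<sigma>((1 \<otimes> a)\<Delta>(b))\<close>\<close>
     bij (tlift (\<lambda>a b. tflip (D3 \<Delta> a b))) \<and> bij (tlift (\<lambda>a b. tflip (D4 \<Delta> a b)))"

definition is_counit :: "('a::calg \<Rightarrow> ('a, 'a) tensor mult) \<Rightarrow> ('a \<Rightarrow> complex) \<Rightarrow> bool" where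
  "is_counit \<Delta> \<epsilon> \<longleftrightarrow> clinear \<epsilon> \<and>
     (\<forall>a b. tlift (\<lambda>p q. \<epsilon> p *\<^sub>C q) (D1 \<Delta> a b) = a * b) \<and>
     (\<forall>a b. tlift (\<lambda>p q. \<epsilon> q *\<^sub>C p) (D2 \<Delta> a b) = a * b)"

definition is_antipode :: "('a::calg \<Rightarrow> ('a, 'a) tensor mult) \<Rightarrow> ('a \<Rightarrow> 'a) \<Rightarrow> bool" where
  "is_antipode \<Delta> S \<longleftrightarrow> clinear S \<and> (\<exists>\<epsilon>. is_counit \<Delta> \<epsilon> \<and>
     (\<forall>a b. tlift (\<lambda>p q. S p * q) (D1 \<Delta> a b) = \<epsilon> a *\<^sub>C b) \<and>
     (\<forall>a b. tlift (\<lambda>p q. p * S q) (D2 \<Delta> a b) = \<epsilon> b *\<^sub>C a))"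

definition module_algebra ::
  "('a::calg \<Rightarrow> ('a, 'a) tensor mult) \<Rightarrow> ('a \<Rightarrow> 'r::calg \<Rightarrow> 'r) \<Rightarrow> bool" where
  "module_algebra \<Delta> act \<longleftrightarrow>
     nondegenerate ((*) :: 'r \<Rightarrow> 'r \<Rightarrow> 'r) \<and>
     (\<forall>x. clinear (\<lambda>a. act a x)) \<and> (\<forall>a. clinear (act a)) \<and>
     (\<forall>a b x. act (a * b) x = act a (act b x)) \<and>
     \<comment> \<open>unital: \<open>AR = R\<close>\<close>
     (\<forall>x. \<exists>ps. x = (\<Sum>(a, y)\<leftarrow>ps. act a y)) \<and>
     \<comment> \<open>\<open>a((b y) x') = \<Sum> (a\<^sub>(\<^sub>1\<^sub>) b y)(a\<^sub>(\<^sub>2\<^sub>) x')\<close>, the leg \<open>a\<^sub>(\<^sub>1\<^sub>)\<close> covered by \<open>b\<close>\<close>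
     (\<forall>a b y x'. act a (act b y * x') = tlift (\<lambda>p q. act p y * act q x') (D3 \<Delta> a b))"

text \<open>A homomorphism \<open>\<gamma> : A \<rightarrow> M(R)\<close> is unital if \<open>\<gamma>(A)R = R\<gamma>(A) = R\<close> (spans).\<close>
definition unital_hom :: "('a::calg \<Rightarrow> 'r::calg mult) \<Rightarrow> bool" where
  "unital_hom \<gamma> \<longleftrightarrow> hom_to_mult (*) \<gamma> \<and>
     (\<forall>x. \<exists>ps. x = (\<Sum>(e, y)\<leftarrow>ps. fst (\<gamma> e) y)) \<and>
     (\<forall>x. \<exists>ps. x = (\<Sum>(e, y)\<leftarrow>ps. snd (\<gamma> e) y))"

text \<open>Innerness: \<open>a x = \<Sum> \<gamma>(a\<^sub>(\<^sub>1\<^sub>)) x \<gamma>(S(a\<^sub>(\<^sub>2\<^sub>)))\<close>, where \<open>a\<^sub>(\<^sub>1\<^sub>)\<close> is covered by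
  any \<open>e\<close> with \<open>\<gamma>(e)x = x\<close>, i.e. the right hand side is computed from \<open>\<Delta>(a)(e \<otimes> 1)\<close>.\<close>
definition inner_action ::
  "('a::calg \<Rightarrow> ('a, 'a) tensor mult) \<Rightarrow> ('a \<Rightarrow> 'a) \<Rightarrow> ('a \<Rightarrow> 'r::calg \<Rightarrow> 'r) \<Rightarrow> ('a \<Rightarrow> 'r mult) \<Rightarrow> bool" where
  "inner_action \<Delta> S act \<gamma> \<longleftrightarrow> unital_hom \<gamma> \<and>
     (\<forall>a e x. fst (\<gamma> e) x = x \<longrightarrow>
        act a x = tlift (\<lambda>p q. snd (\<gamma> (S q)) (fst (\<gamma> p) x)) (D3 \<Delta> a e))"

text \<open>Smash product on \<open>R \<otimes> A\<close>: \<open>(x # a)(x' # a') = \<Sum> x (a\<^sub>(\<^sub>1\<^sub>) x') # a\<^sub>(\<^sub>2\<^sub>) a'\<close>,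
  computed from \<open>\<Delta>(a)(1 \<otimes> a')\<close>.\<close>
definition smash_mul ::
  "('a::calg \<Rightarrow> ('a, 'a) tensor mult) \<Rightarrow> ('a \<Rightarrow> 'r::calg \<Rightarrow> 'r) \<Rightarrow>
   ('r, 'a) tensor \<Rightarrow> ('r, 'a) tensor \<Rightarrow> ('r, 'a) tensor" where
  "smash_mul \<Delta> act s t =
     tlift (\<lambda>x a. tlift (\<lambda>x' a'. tlift (\<lambda>p q. (x * act p x') \<otimes> q) (D1 \<Delta> a a')) t) s"

end

theory Submission
  imports Defs
begin

text \<open>The isomorphism is \<open>\<Phi>(x \<otimes> a) = \<Sum> x \<gamma>(a\<^sub>(\<^sub>1\<^sub>)) \<otimes> a\<^sub>(\<^sub>2\<^sub>)\<close>, with inverse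
  \<open>x \<otimes> a \<mapsto> \<Sum> x \<gamma>(S(a\<^sub>(\<^sub>1\<^sub>))) \<otimes> a\<^sub>(\<^sub>2\<^sub>)\<close>.  Innerness gives
  \<open>(a\<^sub>(\<^sub>1\<^sub>) y) \<gamma>(a\<^sub>(\<^sub>2\<^sub>)) = \<gamma>(a) y\<close>, hence
  \<open>\<Phi>((x # a)(y # c)) = \<Sum> x (a\<^sub>(\<^sub>1\<^sub>) y) \<gamma>(a\<^sub>(\<^sub>2\<^sub>) c\<^sub>(\<^sub>1\<^sub>)) \<otimes> a\<^sub>(\<^sub>3\<^sub>) c\<^sub>(\<^sub>2\<^sub>)
     = \<Sum> x \<gamma>(a\<^sub>(\<^sub>1\<^sub>)) y \<gamma>(c\<^sub>(\<^sub>1\<^sub>)) \<otimes> a\<^sub>(\<^sub>2\<^sub>) c\<^sub>(\<^sub>2\<^sub>) = \<Phi>(x # a) \<Phi>(y # c)\<close>.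
  Since \<open>A\<close> has no unit, every Sweedler expression must be covered: elements of \<open>R \<otimes> A\<close> are
  compared through their products with \<open>1 \<otimes> b\<close>, \<open>\<Phi>\<close> is constructed from the decomposition
  \<open>R = R \<gamma>(A)\<close>, and the local units \<open>\<gamma>(e) y = y\<close> required by innerness are obtained from
  \<open>\<gamma>(A) R = R\<close> with the help of the counit and the antipode.\<close>

interpretation cv: vector_space "scaleC :: complex \<Rightarrow> 'a \<Rightarrow> 'a::cvec"
  by unfold_locales (auto simp: scaleC_add_right scaleC_add_left scaleC_scaleC scaleC_one)

lemma clinearI: "(\<And>x y. f (x + y) = f x + f y) \<Longrightarrow> (\<And>c x. f (c *\<^sub>C x) = c *\<^sub>C f x) \<Longrightarrow> clinear f"
  by (simp add: clinear_def)

lemma clinear_add: "clinear f \<Longrightarrow> f (x + y) = f x + f y"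
  by (simp add: clinear_def)

lemma clinear_scale: "clinear f \<Longrightarrow> f (c *\<^sub>C x) = c *\<^sub>C f x"
  by (simp add: clinear_def)

lemma clinear_zero: "clinear f \<Longrightarrow> f 0 = 0"
  using clinear_scale[of f 0 0] by (simp add: cv.scale_zero_left)

lemma clinear_minus: "clinear f \<Longrightarrow> f (- x) = - f x"
  using clinear_scale[of f "-1" x] by (simp add: cv.scale_minus_left)

lemma clinear_diff: "clinear f \<Longrightarrow> f (x - y) = f x - f y"
  using clinear_add[of f x "- y"] clinear_minus[of f y] by simp

lemma clinear_sum: "clinear f \<Longrightarrow> f (sum g A) = (\<Sum>i\<in>A. f (g i))"
  by (induction A rule: infinite_finite_induct) (auto simp: clinear_zero clinear_add)

lemma clinear_ident: "clinear (\<lambda>x. x)"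
  by (simp add: clinearI)

lemma clinear_compose: "clinear f \<Longrightarrow> clinear g \<Longrightarrow> clinear (\<lambda>x. f (g x))"
  by (rule clinearI) (simp_all add: clinear_add clinear_scale)

lemma clinear_add_fun: "clinear f \<Longrightarrow> clinear g \<Longrightarrow> clinear (\<lambda>x. f x + g x)"
  by (rule clinearI) (simp_all add: clinear_add clinear_scale cv.scale_right_distrib)

lemma clinear_scale_fun: "clinear f \<Longrightarrow> clinear (\<lambda>x. c *\<^sub>C f x)"
  by (rule clinearI) (simp_all add: clinear_add clinear_scale cv.scale_right_distrib scaleC_scaleC mult.commute)

lemma clinear_scale_by_fun: "clinear (f :: 'a::cvec \<Rightarrow> complex) \<Longrightarrow> clinear (\<lambda>x. f x *\<^sub>C v)"
  by (rule clinearI)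
     (simp_all add: clinear_add clinear_scale cv.scale_left_distrib scaleC_complex_def scaleC_scaleC)

lemma clinear_mult_left_comp: "clinear f \<Longrightarrow> clinear (\<lambda>x. (a::'a::calg) * f x)"
  by (rule clinearI) (simp_all add: clinear_add clinear_scale distrib_left scaleC_mult_right)

lemma clinear_mult_right_comp: "clinear f \<Longrightarrow> clinear (\<lambda>x. f x * (a::'a::calg))"
  by (rule clinearI) (simp_all add: clinear_add clinear_scale distrib_right scaleC_mult_left)

lemma clinear_lmult: "clinear (\<lambda>y. (e::'a::calg) * y)"
  by (rule clinear_mult_left_comp[OF clinear_ident])

lemma clinear_rmult: "clinear (\<lambda>y. y * (e::'a::calg))"
  by (rule clinear_mult_right_comp[OF clinear_ident])

definition cbilinear :: "('a::cvec \<Rightarrow> 'b::cvec \<Rightarrow> 'c::cvec) \<Rightarrow> bool" where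
  "cbilinear \<phi> \<longleftrightarrow> (\<forall>x. clinear (\<phi> x)) \<and> (\<forall>y. clinear (\<lambda>x. \<phi> x y))"

lemma cbilinearI: "(\<And>x. clinear (\<phi> x)) \<Longrightarrow> (\<And>y. clinear (\<lambda>x. \<phi> x y)) \<Longrightarrow> cbilinear \<phi>"
  by (simp add: cbilinear_def)

lemma cbilinear_compose:
  "cbilinear \<phi> \<Longrightarrow> clinear f \<Longrightarrow> clinear g \<Longrightarrow> cbilinear (\<lambda>p q. \<phi> (f p) (g q))"
  unfolding cbilinear_def by (auto intro: clinear_compose)

lemma cv_representation_clinear:
  assumes "cv.independent B" "cv.span B = UNIV"
  shows "clinear (\<lambda>v. cv.representation B v b)"
  by (rule clinearI)
     (simp_all add: cv.representation_add[OF assms(1)] cv.representation_scale[OF assms(1)] assms(2)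
       scaleC_complex_def)

lemma subspace_range_clinear:
  assumes "clinear g"
  shows "cv.subspace (range g)"
proof (rule cv.subspaceI)
  show "0 \<in> range g" using clinear_zero[OF assms] by (metis rangeI)
next
  fix u v assume "u \<in> range g" "v \<in> range g"
  then obtain a b where "u = g a" "v = g b" by blast
  then have "u + v = g (a + b)" by (simp add: clinear_add[OF assms])
  then show "u + v \<in> range g" by (metis rangeI)
next
  fix c u assume "u \<in> range g"
  then obtain a where "u = g a" by blast
  then have "c *\<^sub>C u = g (c *\<^sub>C a)" by (simp add: clinear_scale[OF assms])
  then show "c *\<^sub>C u \<in> range g" by (metis rangeI)
qed

section \<open>The universal property of the tensor product\<close>

text \<open>It does not depend on the choice
  because pairing the coefficient function of any relation in \<open>trel\<close> with a bilinear \<open>\<phi>\<close>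
  gives \<open>0\<close>.\<close>

definition coeff_supp :: "('p \<Rightarrow> complex) \<Rightarrow> 'p set" where
  "coeff_supp f = {p. f p \<noteq> 0}"

lemma sum_ind_scale:
  assumes "finite A" "q \<in> A"
  shows "(\<Sum>p\<in>A. ind q p *\<^sub>C g p) = g q"
proof -
  have "ind q p *\<^sub>C g p = (if p = q then g q else 0)" for p
    by (simp add: ind_def cv.scale_zero_left)
  then show ?thesis
    using assms by (simp add: sum.delta)
qed

lemma sum_ind_scale3:
  assumes "finite A" "q1 \<in> A" "q2 \<in> A" "q3 \<in> A"
  shows "(\<Sum>p\<in>A. (ind q1 p - ind q2 p - ind q3 p) *\<^sub>C g p) = g q1 - g q2 - g q3"
proof -
  have "(\<Sum>p\<in>A. (ind q1 p - ind q2 p - ind q3 p) *\<^sub>C g p) =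
     (\<Sum>p\<in>A. ind q1 p *\<^sub>C g p) - (\<Sum>p\<in>A. ind q2 p *\<^sub>C g p) - (\<Sum>p\<in>A. ind q3 p *\<^sub>C g p)"
    by (simp only: cv.scale_left_diff_distrib sum_subtractf)
  then show ?thesis
    by (simp only: sum_ind_scale[OF assms(1,2)] sum_ind_scale[OF assms(1,3)] sum_ind_scale[OF assms(1,4)])
qed

lemma sum_ind_scale2:
  assumes "finite A" "q1 \<in> A" "q2 \<in> A"
  shows "(\<Sum>p\<in>A. (ind q1 p - c * ind q2 p) *\<^sub>C g p) = g q1 - c *\<^sub>C g q2"
proof -
  have "(\<Sum>p\<in>A. (ind q1 p - c * ind q2 p) *\<^sub>C g p) =
     (\<Sum>p\<in>A. ind q1 p *\<^sub>C g p) - c *\<^sub>C (\<Sum>p\<in>A. ind q2 p *\<^sub>C g p)"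
    by (simp only: cv.scale_left_diff_distrib sum_subtractf cv.scale_sum_right scaleC_scaleC)
  then show ?thesis by (simp only: sum_ind_scale[OF assms(1,2)] sum_ind_scale[OF assms(1,3)])
qed

lemma sum_coeff_supp:
  assumes "finite A" "coeff_supp f \<subseteq> A"
  shows "(\<Sum>p\<in>A. f p *\<^sub>C g p) = (\<Sum>p\<in>coeff_supp f. f p *\<^sub>C g p)"
  by (rule sum.mono_neutral_right[OF assms]) (simp add: coeff_supp_def cv.scale_zero_left)

lemma pairing_zero_coeff_supp:
  assumes "(\<Sum>p\<in>A. f p *\<^sub>C g p) = 0" "finite A" "coeff_supp f \<subseteq> A"
  shows "finite (coeff_supp f) \<and> (\<Sum>p\<in>coeff_supp f. f p *\<^sub>C g p) = 0"
  using assms sum_coeff_supp[OF assms(2,3), of g] finite_subset by metis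

lemma trel_pairing_zero:
  fixes \<phi> :: "'a::cvec \<Rightarrow> 'b::cvec \<Rightarrow> 'c::cvec"
  assumes "trel f" and \<phi>: "cbilinear \<phi>"
  shows "finite (coeff_supp f) \<and> (\<Sum>p\<in>coeff_supp f. f p *\<^sub>C \<phi> (fst p) (snd p)) = 0"
  using assms(1)
proof (induction rule: trel.induct)
  case zero
  then show ?case by (simp add: coeff_supp_def)
next
  case (add f g)
  let ?A = "coeff_supp f \<union> coeff_supp g"
  let ?g = "\<lambda>p. \<phi> (fst p) (snd p)"
  have fin: "finite ?A" using add by auto
  have "(\<Sum>p\<in>?A. (f p + g p) *\<^sub>C ?g p) = (\<Sum>p\<in>?A. f p *\<^sub>C ?g p) + (\<Sum>p\<in>?A. g p *\<^sub>C ?g p)"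
    by (simp only: cv.scale_left_distrib sum.distrib)
  also have "\<dots> = 0"
    using add.IH sum_coeff_supp[OF fin, of f ?g] sum_coeff_supp[OF fin, of g ?g] by simp
  finally show ?case
    by (rule pairing_zero_coeff_supp[OF _ fin]) (auto simp: coeff_supp_def)
next
  case (scale f c)
  have "(\<Sum>p\<in>coeff_supp f. (c * f p) *\<^sub>C \<phi> (fst p) (snd p))
      = c *\<^sub>C (\<Sum>p\<in>coeff_supp f. f p *\<^sub>C \<phi> (fst p) (snd p))"
    by (simp only: cv.scale_sum_right scaleC_scaleC)
  also have "\<dots> = 0" using scale.IH by (simp only: cv.scale_zero_right)
  finally show ?case
    by (rule pairing_zero_coeff_supp) (use scale.IH in \<open>auto simp: coeff_supp_def\<close>)
next
  case (lin_left x x' y)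
  let ?A = "{(x + x', y), (x, y), (x', y)}"
  have "(\<Sum>p\<in>?A. (ind (x + x', y) p - ind (x, y) p - ind (x', y) p) *\<^sub>C \<phi> (fst p) (snd p))
     = \<phi> (x + x') y - \<phi> x y - \<phi> x' y"
    using sum_ind_scale3[of ?A "(x + x', y)" "(x, y)" "(x', y)" "\<lambda>p. \<phi> (fst p) (snd p)"] by simp
  also have "\<dots> = 0" using \<phi> by (simp add: cbilinear_def clinear_def)
  finally show ?case by (rule pairing_zero_coeff_supp) (auto simp: coeff_supp_def ind_def)
next
  case (lin_right x y y')
  let ?A = "{(x, y + y'), (x, y), (x, y')}"
  have "(\<Sum>p\<in>?A. (ind (x, y + y') p - ind (x, y) p - ind (x, y') p) *\<^sub>C \<phi> (fst p) (snd p))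
     = \<phi> x (y + y') - \<phi> x y - \<phi> x y'"
    using sum_ind_scale3[of ?A "(x, y + y')" "(x, y)" "(x, y')" "\<lambda>p. \<phi> (fst p) (snd p)"] by simp
  also have "\<dots> = 0" using \<phi> by (simp add: cbilinear_def clinear_def)
  finally show ?case by (rule pairing_zero_coeff_supp) (auto simp: coeff_supp_def ind_def)
next
  case (hom_left c x y)
  let ?A = "{(c *\<^sub>C x, y), (x, y)}"
  have "(\<Sum>p\<in>?A. (ind (c *\<^sub>C x, y) p - c * ind (x, y) p) *\<^sub>C \<phi> (fst p) (snd p))
     = \<phi> (c *\<^sub>C x) y - c *\<^sub>C \<phi> x y"
    using sum_ind_scale2[of ?A "(c *\<^sub>C x, y)" "(x, y)" c "\<lambda>p. \<phi> (fst p) (snd p)"] by simp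
  also have "\<dots> = 0" using \<phi> by (simp add: cbilinear_def clinear_def)
  finally show ?case by (rule pairing_zero_coeff_supp) (auto simp: coeff_supp_def ind_def)
next
  case (hom_right x c y)
  let ?A = "{(x, c *\<^sub>C y), (x, y)}"
  have "(\<Sum>p\<in>?A. (ind (x, c *\<^sub>C y) p - c * ind (x, y) p) *\<^sub>C \<phi> (fst p) (snd p))
     = \<phi> x (c *\<^sub>C y) - c *\<^sub>C \<phi> x y"
    using sum_ind_scale2[of ?A "(x, c *\<^sub>C y)" "(x, y)" c "\<lambda>p. \<phi> (fst p) (snd p)"] by simp
  also have "\<dots> = 0" using \<phi> by (simp add: cbilinear_def clinear_def)
  finally show ?case by (rule pairing_zero_coeff_supp) (auto simp: coeff_supp_def ind_def)
qed

lemma sum_list_eq_sum_fv: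
  assumes "finite A" "snd ` set xs \<subseteq> A"
  shows "(\<Sum>(c, x, y)\<leftarrow>xs. c *\<^sub>C \<phi> x y) = (\<Sum>p\<in>A. fv xs p *\<^sub>C \<phi> (fst p) (snd p))"
  using assms(2)
proof (induction xs)
  case Nil
  then show ?case by (simp add: fv_def cv.scale_zero_left)
next
  case (Cons a xs)
  obtain c x y where a: "a = (c, x, y)" by (cases a) auto
  have xy: "(x, y) \<in> A" using Cons.prems a by auto
  have "(if (x, y) = p then c else 0) *\<^sub>C \<phi> (fst p) (snd p) = (if (x, y) = p then c *\<^sub>C \<phi> x y else 0)" for p
    by (auto simp: cv.scale_zero_left)
  then have head: "(\<Sum>p\<in>A. (if (x, y) = p then c else 0) *\<^sub>C \<phi> (fst p) (snd p)) = c *\<^sub>C \<phi> x y"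
    using assms(1) xy by (simp add: sum.delta)
  have "fv (a # xs) p = (if (x, y) = p then c else 0) + fv xs p" for p
    by (simp add: fv_def a)
  then have "(\<Sum>p\<in>A. fv (a # xs) p *\<^sub>C \<phi> (fst p) (snd p))
     = (\<Sum>p\<in>A. (if (x, y) = p then c else 0) *\<^sub>C \<phi> (fst p) (snd p)) + (\<Sum>p\<in>A. fv xs p *\<^sub>C \<phi> (fst p) (snd p))"
    by (simp only: cv.scale_left_distrib sum.distrib)
  then show ?case using head Cons by (simp add: a)
qed

lemma fv_notin: "p \<notin> snd ` set xs \<Longrightarrow> fv xs p = 0"
  by (induction xs) (auto simp: fv_def)

lemma tequiv_bilinear_sum:
  assumes "tequiv xs ys" "cbilinear \<phi>"
  shows "(\<Sum>(c, x, y)\<leftarrow>xs. c *\<^sub>C \<phi> x y) = (\<Sum>(c, x, y)\<leftarrow>ys. c *\<^sub>C \<phi> x y)"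
proof -
  define A where "A = snd ` set xs \<union> snd ` set ys"
  define f where "f = (\<lambda>p. fv xs p - fv ys p)"
  define g where "g = (\<lambda>p. \<phi> (fst p) (snd p))"
  have fin: "finite A" by (simp add: A_def)
  have supp: "coeff_supp f \<subseteq> A"
  proof
    fix p assume p: "p \<in> coeff_supp f"
    show "p \<in> A"
    proof (rule ccontr)
      assume "p \<notin> A"
      then have "fv xs p = 0" "fv ys p = 0" using fv_notin[of p xs] fv_notin[of p ys] by (auto simp: A_def)
      with p show False by (simp add: coeff_supp_def f_def)
    qed
  qed
  have "(\<Sum>(c, x, y)\<leftarrow>xs. c *\<^sub>C \<phi> x y) - (\<Sum>(c, x, y)\<leftarrow>ys. c *\<^sub>C \<phi> x y)
      = (\<Sum>p\<in>A. fv xs p *\<^sub>C g p) - (\<Sum>p\<in>A. fv ys p *\<^sub>C g p)"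
    unfolding g_def by (subst (1 2) sum_list_eq_sum_fv[OF fin]) (auto simp: A_def)
  also have "\<dots> = (\<Sum>p\<in>A. f p *\<^sub>C g p)"
    by (simp add: f_def cv.scale_left_diff_distrib sum_subtractf)
  also have "\<dots> = (\<Sum>p\<in>coeff_supp f. f p *\<^sub>C g p)"
    by (rule sum_coeff_supp[OF fin supp])
  also have "\<dots> = 0"
    using trel_pairing_zero[OF _ assms(2), of f] assms(1) by (simp add: tequiv_def f_def g_def)
  finally show ?thesis by simp
qed

lemma tlift_abs:
  assumes "cbilinear \<phi>"
  shows "tlift \<phi> (abs_tensor xs) = (\<Sum>(c, x, y)\<leftarrow>xs. c *\<^sub>C \<phi> x y)"
proof -
  have "tequiv (rep_tensor (abs_tensor xs)) xs"
    by (metis Quotient3_abs_rep Quotient3_tensor tensor.abs_eq_iff)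
  then show ?thesis unfolding tlift_def by (rule tequiv_bilinear_sum[OF _ assms])
qed

lemma abs_rep_tensor: "abs_tensor (rep_tensor t) = t"
  by (rule Quotient3_abs_rep[OF Quotient3_tensor])

lemma tlift_add:
  assumes "cbilinear \<phi>"
  shows "tlift \<phi> (s + t) = tlift \<phi> s + tlift \<phi> t"
proof -
  have "s + t = abs_tensor (rep_tensor s @ rep_tensor t)"
    by (metis abs_rep_tensor plus_tensor.abs_eq)
  then show ?thesis
    by (metis (no_types, lifting) abs_rep_tensor assms map_append sum_list_append tlift_abs)
qed

lemma sum_list_scale_coeffs:
  "(\<Sum>(c, x, y)\<leftarrow>map (\<lambda>(d, q). (a * d, q)) xs. c *\<^sub>C \<phi> x y) = a *\<^sub>C (\<Sum>(c, x, y)\<leftarrow>xs. c *\<^sub>C \<phi> x y)"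
  by (induction xs) (auto simp: cv.scale_zero_right cv.scale_right_distrib scaleC_scaleC)

lemma tlift_scale:
  assumes "cbilinear \<phi>"
  shows "tlift \<phi> (a *\<^sub>C t) = a *\<^sub>C tlift \<phi> t"
proof -
  have "a *\<^sub>C t = abs_tensor (map (\<lambda>(d, q). (a * d, q)) (rep_tensor t))"
    by (metis abs_rep_tensor scaleC_tensor.abs_eq)
  then show ?thesis
    by (metis abs_rep_tensor assms sum_list_scale_coeffs tlift_abs)
qed

lemma clinear_tlift: "cbilinear \<phi> \<Longrightarrow> clinear (tlift \<phi>)"
  by (simp add: clinearI tlift_add tlift_scale)

lemma tlift_tens: "cbilinear \<phi> \<Longrightarrow> tlift \<phi> (x \<otimes> y) = \<phi> x y"
  by (simp add: tens_def tlift_abs scaleC_one)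

lemma tlift_fun_add: "tlift (\<lambda>x y. \<phi> x y + \<psi> x y) t = tlift \<phi> t + tlift \<psi> t"
proof -
  have "(\<Sum>(c, x, y)\<leftarrow>xs. c *\<^sub>C (\<phi> x y + \<psi> x y))
      = (\<Sum>(c, x, y)\<leftarrow>xs. c *\<^sub>C \<phi> x y) + (\<Sum>(c, x, y)\<leftarrow>xs. c *\<^sub>C \<psi> x y)" for xs
    by (induction xs) (auto simp: cv.scale_right_distrib)
  then show ?thesis unfolding tlift_def .
qed

lemma tlift_fun_scale: "tlift (\<lambda>x y. a *\<^sub>C \<phi> x y) t = a *\<^sub>C tlift \<phi> t"
proof -
  have "(\<Sum>(c, x, y)\<leftarrow>xs. c *\<^sub>C (a *\<^sub>C \<phi> x y)) = a *\<^sub>C (\<Sum>(c, x, y)\<leftarrow>xs. c *\<^sub>C \<phi> x y)" for xs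
    by (induction xs) (auto simp: cv.scale_right_distrib scaleC_scaleC mult.commute cv.scale_zero_right)
  then show ?thesis unfolding tlift_def .
qed

lemma tlift_fun_zero: "tlift (\<lambda>x y. 0) t = 0"
  using tlift_fun_scale[of 0 "\<lambda>x y. 0" t] by (simp add: cv.scale_zero_left)

lemma tlift_fun_linear:
  assumes "clinear L"
  shows "L (tlift \<phi> t) = tlift (\<lambda>x y. L (\<phi> x y)) t"
proof -
  have "L (\<Sum>(c, x, y)\<leftarrow>xs. c *\<^sub>C \<phi> x y) = (\<Sum>(c, x, y)\<leftarrow>xs. c *\<^sub>C L (\<phi> x y))" for xs
    by (induction xs) (auto simp: clinear_zero[OF assms] clinear_add[OF assms] clinear_scale[OF assms])
  then show ?thesis unfolding tlift_def .
qed

lemma sum_list_swap: "(\<Sum>a\<leftarrow>xs. \<Sum>b\<leftarrow>ys. f a b) = (\<Sum>b\<leftarrow>ys. \<Sum>a\<leftarrow>xs. f a b :: 'c::comm_monoid_add)"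
  by (induction xs) (auto simp: sum_list_addf)

lemma scaleC_sum_list: "c *\<^sub>C (\<Sum>a\<leftarrow>xs. f a) = (\<Sum>a\<leftarrow>xs. c *\<^sub>C f a)"
  by (induction xs) (auto simp: cv.scale_right_distrib cv.scale_zero_right)

lemma tlift_swap: "tlift (\<lambda>x y. tlift (H x y) s) t = tlift (\<lambda>u v. tlift (\<lambda>x y. H x y u v) t) s"
  unfolding tlift_def
  by (simp add: scaleC_sum_list split_def scaleC_scaleC mult.commute sum_list_swap[where xs="rep_tensor t"])

lemma tens_add_left: "(x + x') \<otimes> y = x \<otimes> y + x' \<otimes> y"
proof -
  have "tequiv [(1, x + x', y)] [(1, x, y), (1, x', y)]"
    unfolding tequiv_def
    by (rule trel_cong[OF trel.lin_left[of x x' y]]) (auto simp: fv_def ind_def fun_eq_iff)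
  then show ?thesis by (simp add: tens_def plus_tensor.abs_eq tensor.abs_eq_iff)
qed

lemma tens_add_right: "x \<otimes> (y + y') = x \<otimes> y + x \<otimes> y'"
proof -
  have "tequiv [(1, x, y + y')] [(1, x, y), (1, x, y')]"
    unfolding tequiv_def
    by (rule trel_cong[OF trel.lin_right[of x y y']]) (auto simp: fv_def ind_def fun_eq_iff)
  then show ?thesis by (simp add: tens_def plus_tensor.abs_eq tensor.abs_eq_iff)
qed

lemma tens_scale_left: "(c *\<^sub>C x) \<otimes> y = c *\<^sub>C (x \<otimes> y)"
proof -
  have "tequiv [(1, c *\<^sub>C x, y)] [(c, x, y)]"
    unfolding tequiv_def
    by (rule trel_cong[OF trel.hom_left[of c x y]]) (auto simp: fv_def ind_def fun_eq_iff)
  then show ?thesis by (simp add: tens_def scaleC_tensor.abs_eq tensor.abs_eq_iff)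
qed

lemma tens_scale_right: "x \<otimes> (c *\<^sub>C y) = c *\<^sub>C (x \<otimes> y)"
proof -
  have "tequiv [(1, x, c *\<^sub>C y)] [(c, x, y)]"
    unfolding tequiv_def
    by (rule trel_cong[OF trel.hom_right[of x c y]]) (auto simp: fv_def ind_def fun_eq_iff)
  then show ?thesis by (simp add: tens_def scaleC_tensor.abs_eq tensor.abs_eq_iff)
qed

lemma clinear_tens_left: "clinear (\<lambda>x. x \<otimes> y)"
  by (simp add: clinearI tens_add_left tens_scale_left)

lemma clinear_tens_right: "clinear (\<lambda>y. x \<otimes> y)"
  by (simp add: clinearI tens_add_right tens_scale_right)

lemma tens_zero_left: "0 \<otimes> y = 0"
  by (rule clinear_zero[OF clinear_tens_left])

lemma tens_zero_right: "x \<otimes> 0 = 0"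
  by (rule clinear_zero[OF clinear_tens_right])

lemma clinear_tens_left_comp: "clinear f \<Longrightarrow> clinear (\<lambda>x. f x \<otimes> y)"
  by (rule clinear_compose[OF clinear_tens_left])

lemma clinear_tens_right_comp: "clinear g \<Longrightarrow> clinear (\<lambda>x. y \<otimes> g x)"
  by (rule clinear_compose[OF clinear_tens_right])

lemma abs_tensor_eq_sum: "abs_tensor xs = (\<Sum>(c, x, y)\<leftarrow>xs. c *\<^sub>C (x \<otimes> y))"
proof (induction xs)
  case Nil
  then show ?case by (simp add: zero_tensor.abs_eq)
next
  case (Cons a xs)
  obtain c x y where a: "a = (c, x, y)" by (cases a) auto
  have "abs_tensor (a # xs) = abs_tensor [a] + abs_tensor xs"
    by (simp add: plus_tensor.abs_eq)
  moreover have "abs_tensor [a] = c *\<^sub>C (x \<otimes> y)"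
    by (simp add: a tens_def scaleC_tensor.abs_eq)
  ultimately show ?case using Cons by (simp add: a)
qed

lemma tensor_induct [case_names zero tens add]:
  assumes "P 0" "\<And>x y. P (x \<otimes> y)" "\<And>s t. P s \<Longrightarrow> P t \<Longrightarrow> P (s + t)"
  shows "P t"
proof -
  have "P (\<Sum>(c, x, y)\<leftarrow>xs. c *\<^sub>C (x \<otimes> y))" for xs
    by (induction xs) (auto simp: assms tens_scale_left[symmetric])
  then show ?thesis using abs_tensor_eq_sum[of "rep_tensor t"] abs_rep_tensor[of t] by metis
qed

lemma clinear_tensor_eqI:
  assumes "clinear L" "clinear M" "\<And>x y. L (x \<otimes> y) = M (x \<otimes> y)"
  shows "L t = M t"
  by (induction t rule: tensor_induct) (auto simp: assms clinear_zero[OF assms(1)] clinear_zero[OF assms(2)]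
      clinear_add[OF assms(1)] clinear_add[OF assms(2)])

lemma cbilinear_tensor_eqI:
  assumes "\<And>s. clinear (\<lambda>t. F s t)" "\<And>s. clinear (\<lambda>t. G s t)"
    and "\<And>t. clinear (\<lambda>s. F s t)" "\<And>t. clinear (\<lambda>s. G s t)"
    and "\<And>x y x' y'. F (x \<otimes> y) (x' \<otimes> y') = G (x \<otimes> y) (x' \<otimes> y')"
  shows "F s t = G s t"
proof -
  have "F (x \<otimes> y) t = G (x \<otimes> y) t" for x y
    by (rule clinear_tensor_eqI[where L="F (x \<otimes> y)" and M="G (x \<otimes> y)", OF assms(1,2,5)])
  then show ?thesis
    by (rule clinear_tensor_eqI[where L="\<lambda>s. F s t" and M="\<lambda>s. G s t", OF assms(3,4)])
qed

lemma clinear_tlift_comp: "cbilinear \<phi> \<Longrightarrow> clinear f \<Longrightarrow> clinear (\<lambda>x. tlift \<phi> (f x))"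
  by (rule clinear_compose[OF clinear_tlift])

lemma clinear_tlift_fun:
  assumes "\<And>u v. clinear (\<lambda>x. \<phi> x u v)"
  shows "clinear (\<lambda>x. tlift (\<phi> x) t)"
proof (rule clinearI)
  fix x y
  have "\<phi> (x + y) = (\<lambda>u v. \<phi> x u v + \<phi> y u v)"
    using clinear_add[OF assms] by (intro ext) simp
  then show "tlift (\<phi> (x + y)) t = tlift (\<phi> x) t + tlift (\<phi> y) t" by (simp add: tlift_fun_add)
next
  fix c x
  have "\<phi> (c *\<^sub>C x) = (\<lambda>u v. c *\<^sub>C \<phi> x u v)"
    using clinear_scale[OF assms] by (intro ext) simp
  then show "tlift (\<phi> (c *\<^sub>C x)) t = c *\<^sub>C tlift (\<phi> x) t" by (simp add: tlift_fun_scale)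
qed

lemma tlift_tlift_tens:
  "cbilinear \<Theta> \<Longrightarrow> tlift \<Theta> (tlift (\<lambda>a b. F a b \<otimes> G a b) t) = tlift (\<lambda>a b. \<Theta> (F a b) (G a b)) t"
  by (simp add: tlift_fun_linear[OF clinear_tlift] tlift_tens)

lemma cbilinear_tmap: "clinear f \<Longrightarrow> clinear g \<Longrightarrow> cbilinear (\<lambda>x y. f x \<otimes> g y)"
  by (intro cbilinearI clinear_tens_left_comp clinear_tens_right_comp)

lemma tmap_tens: "clinear f \<Longrightarrow> clinear g \<Longrightarrow> tmap f g (x \<otimes> y) = f x \<otimes> g y"
  by (simp add: tmap_def tlift_tens cbilinear_tmap)

lemma clinear_tmap: "clinear f \<Longrightarrow> clinear g \<Longrightarrow> clinear (tmap f g)"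
  unfolding tmap_def by (rule clinear_tlift[OF cbilinear_tmap])

lemma tlift_tmap:
  assumes "clinear f" "clinear g" "cbilinear \<phi>"
  shows "tlift \<phi> (tmap f g X) = tlift (\<lambda>p q. \<phi> (f p) (g q)) X"
proof -
  have \<psi>: "cbilinear (\<lambda>p q. \<phi> (f p) (g q))" by (rule cbilinear_compose[OF assms(3,1,2)])
  show ?thesis
    by (rule clinear_tensor_eqI[OF clinear_compose[OF clinear_tlift[OF assms(3)] clinear_tmap[OF assms(1,2)]]
          clinear_tlift[OF \<psi>]])
       (simp add: tmap_tens[OF assms(1,2)] tlift_tens[OF assms(3)] tlift_tens[OF \<psi>])
qed

lemma cbilinear_tflip: "cbilinear (\<lambda>x y. y \<otimes> x)"
  by (simp add: cbilinear_def clinear_tens_left clinear_tens_right)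

lemma tflip_tens: "tflip (x \<otimes> y) = y \<otimes> x"
  by (simp add: tflip_def tlift_tens cbilinear_tflip)

lemma clinear_tflip: "clinear tflip"
  unfolding tflip_def by (rule clinear_tlift[OF cbilinear_tflip])

lemma tflip_tflip: "tflip (tflip t) = t"
  by (rule clinear_tensor_eqI[where L="\<lambda>t. tflip (tflip t)",
        OF clinear_compose[OF clinear_tflip clinear_tflip] clinear_ident])
     (simp add: tflip_tens)

section \<open>Slices and separation by functionals\<close>

definition slice1 :: "('a::cvec \<Rightarrow> complex) \<Rightarrow> ('a, 'b::cvec) tensor \<Rightarrow> 'b" where
  "slice1 f = tlift (\<lambda>x y. f x *\<^sub>C y)"

definition slice2 :: "('b::cvec \<Rightarrow> complex) \<Rightarrow> ('a::cvec, 'b) tensor \<Rightarrow> 'a" where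
  "slice2 g = tlift (\<lambda>x y. g y *\<^sub>C x)"

lemma cbilinear_slice1: "clinear f \<Longrightarrow> cbilinear (\<lambda>x y. f x *\<^sub>C y)"
  by (intro cbilinearI clinear_scale_fun clinear_ident clinear_scale_by_fun)

lemma cbilinear_slice2: "clinear g \<Longrightarrow> cbilinear (\<lambda>x y. g y *\<^sub>C x)"
  by (intro cbilinearI clinear_scale_fun clinear_ident clinear_scale_by_fun)

lemma slice1_tens: "clinear f \<Longrightarrow> slice1 f (x \<otimes> y) = f x *\<^sub>C y"
  by (simp add: slice1_def tlift_tens cbilinear_slice1)

lemma slice2_tens: "clinear g \<Longrightarrow> slice2 g (x \<otimes> y) = g y *\<^sub>C x"
  by (simp add: slice2_def tlift_tens cbilinear_slice2)

lemma clinear_slice1: "clinear f \<Longrightarrow> clinear (slice1 f)"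
  by (simp add: slice1_def clinear_tlift cbilinear_slice1)

lemma clinear_slice2: "clinear g \<Longrightarrow> clinear (slice2 g)"
  by (simp add: slice2_def clinear_tlift cbilinear_slice2)

lemma slice2_eq_slice1_tflip: "clinear g \<Longrightarrow> slice2 g t = slice1 g (tflip t)"
  by (rule clinear_tensor_eqI[OF clinear_slice2 clinear_compose[OF clinear_slice1 clinear_tflip]])
     (simp_all add: tflip_tens slice1_tens slice2_tens)

lemma slice1_slice2_swap: "clinear f \<Longrightarrow> clinear h \<Longrightarrow> h (slice1 f t) = f (slice2 h t)"
  by (rule clinear_tensor_eqI[where L="\<lambda>t. h (slice1 f t)" and M="\<lambda>t. f (slice2 h t)"])
     (simp_all add: clinear_compose[OF _ clinear_slice1] clinear_compose[OF _ clinear_slice2]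
       slice1_tens slice2_tens clinear_scale scaleC_complex_def)

lemma slice2_fun_sum_list: "(\<Sum>p\<leftarrow>xs. slice2 (g p) t) = slice2 (\<lambda>q. \<Sum>p\<leftarrow>xs. g p q) t"
  by (induction xs) (simp_all add: slice2_def scaleC_add_left tlift_fun_add cv.scale_zero_left tlift_fun_zero)

definition cbasis :: "'a::cvec set" where
  "cbasis = cv.extend_basis {}"

definition coord :: "'a::cvec \<Rightarrow> 'a \<Rightarrow> complex" where
  "coord b v = cv.representation cbasis v b"

lemma cbasis_independent: "cv.independent cbasis"
  unfolding cbasis_def by (rule cv.independent_extend_basis) (simp add: cv.independent_empty)

lemma cbasis_span: "cv.span cbasis = UNIV"
  unfolding cbasis_def by (rule cv.span_extend_basis) (simp add: cv.independent_empty)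

lemma clinear_coord: "clinear (coord b)"
  unfolding coord_def by (rule cv_representation_clinear[OF cbasis_independent cbasis_span])

lemma finite_coord_supp: "finite {b. coord b v \<noteq> 0}"
  unfolding coord_def by (rule cv.finite_representation)

lemma sum_coord_scale:
  assumes "finite F" "{b. coord b v \<noteq> 0} \<subseteq> F"
  shows "(\<Sum>b\<in>F. coord b v *\<^sub>C b) = v"
proof -
  have "(\<Sum>b\<in>F. coord b v *\<^sub>C b) = (\<Sum>b\<in>{b. coord b v \<noteq> 0}. coord b v *\<^sub>C b)"
    using assms by (intro sum.mono_neutral_right) (auto simp: cv.scale_zero_left)
  also have "\<dots> = v"
    unfolding coord_def
    by (rule cv.sum_nonzero_representation_eq[OF cbasis_independent]) (simp add: cbasis_span)
  finally show ?thesis .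
qed

lemma vector_eq_0_by_functionals: "(\<And>f. clinear f \<Longrightarrow> f v = (0::complex)) \<Longrightarrow> v = 0"
  using sum_coord_scale[of "{}" v] clinear_coord by auto

lemma subspace_separating_functional:
  fixes V :: "'a::cvec set"
  assumes "cv.subspace V" "y \<notin> V"
  obtains \<omega> :: "'a \<Rightarrow> complex" where "clinear \<omega>" "\<omega> y = 1" "\<And>v. v \<in> V \<Longrightarrow> \<omega> v = 0"
proof -
  obtain B0 where B0: "B0 \<subseteq> V" "cv.independent B0" "V \<subseteq> cv.span B0"
    using cv.maximal_independent_subset[of V] by blast
  have "y \<notin> cv.span B0" using assms cv.span_minimal[OF B0(1) assms(1)] by blast
  then have ind: "cv.independent (insert y B0)" by (rule cv.independent_insertI[OF _ B0(2)])
  define B where "B = cv.extend_basis (insert y B0)"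
  have indB: "cv.independent B" unfolding B_def by (rule cv.independent_extend_basis[OF ind])
  have spanB: "cv.span B = UNIV" unfolding B_def by (rule cv.span_extend_basis[OF ind])
  have supB: "insert y B0 \<subseteq> B" unfolding B_def by (rule cv.extend_basis_superset[OF ind])
  define \<omega> where "\<omega> = (\<lambda>v. cv.representation B v y)"
  have "\<omega> v = 0" if "v \<in> V" for v
  proof -
    have v: "v \<in> cv.span B0" using that B0(3) by blast
    have "cv.representation B v = cv.representation B0 v"
      by (rule cv.representation_extend[OF indB v]) (use supB in auto)
    moreover have "cv.representation B0 v y = 0"
      using cv.representation_ne_zero[of B0 v y] assms(2) B0(1) by blast
    ultimately show ?thesis by (simp add: \<omega>_def)
  qed
  moreover have "clinear \<omega>" unfolding \<omega>_def by (rule cv_representation_clinear[OF indB spanB])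
  moreover have "\<omega> y = 1" using cv.representation_basis[OF indB, of y] supB by (simp add: \<omega>_def)
  ultimately show ?thesis using that by blast
qed

definition basis_decomp :: "'a::cvec set \<Rightarrow> ('a, 'b::cvec) tensor \<Rightarrow> ('a, 'b) tensor" where
  "basis_decomp F t = (\<Sum>b\<in>F. b \<otimes> slice1 (coord b) t)"

definition coord_supp1 :: "('a::cvec, 'b::cvec) tensor \<Rightarrow> 'a set" where
  "coord_supp1 t = (\<Union>(c, x, y)\<in>set (rep_tensor t). {b. coord b x \<noteq> 0})"

lemma finite_coord_supp1: "finite (coord_supp1 t)"
  unfolding coord_supp1_def using finite_coord_supp by auto

lemma clinear_basis_decomp: "clinear (basis_decomp F)"
  unfolding basis_decomp_def
  by (rule clinearI)
     (simp_all add: clinear_add[OF clinear_slice1[OF clinear_coord]] clinear_scale[OF clinear_slice1[OF clinear_coord]]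
       tens_add_right tens_scale_right sum.distrib cv.scale_sum_right)

lemma basis_decomp_tens:
  assumes "finite F" "{b. coord b x \<noteq> 0} \<subseteq> F"
  shows "basis_decomp F (x \<otimes> y) = x \<otimes> y"
proof -
  have "basis_decomp F (x \<otimes> y) = (\<Sum>b\<in>F. (coord b x *\<^sub>C b) \<otimes> y)"
    by (simp add: basis_decomp_def slice1_tens clinear_coord tens_scale_left tens_scale_right)
  also have "\<dots> = (\<Sum>b\<in>F. coord b x *\<^sub>C b) \<otimes> y"
    by (rule clinear_sum[OF clinear_tens_left, symmetric])
  also have "\<dots> = x \<otimes> y" using sum_coord_scale[OF assms] by simp
  finally show ?thesis .
qed

lemma basis_decomp_eq:
  assumes "finite F" "coord_supp1 t \<subseteq> F"
  shows "basis_decomp F t = t"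
proof -
  have "\<forall>(c, x, y)\<in>set xs. {b. coord b x \<noteq> 0} \<subseteq> F \<Longrightarrow>
        basis_decomp F (\<Sum>(c, x, y)\<leftarrow>xs. c *\<^sub>C (x \<otimes> y)) = (\<Sum>(c, x, y)\<leftarrow>xs. c *\<^sub>C (x \<otimes> y))" for xs
    by (induction xs) (auto simp: clinear_zero[OF clinear_basis_decomp] clinear_add[OF clinear_basis_decomp]
        clinear_scale[OF clinear_basis_decomp] basis_decomp_tens[OF assms(1)])
  moreover have "\<forall>(c, x, y)\<in>set (rep_tensor t). {b. coord b x \<noteq> 0} \<subseteq> F"
    using assms(2) by (auto simp: coord_supp1_def)
  ultimately show ?thesis
    using abs_tensor_eq_sum[of "rep_tensor t"] abs_rep_tensor[of t] by metis
qed

lemma tlift_basis_decomp: "cbilinear \<phi> \<Longrightarrow> tlift \<phi> (basis_decomp F t) = (\<Sum>b\<in>F. \<phi> b (slice1 (coord b) t))"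
  unfolding basis_decomp_def by (simp add: clinear_sum[OF clinear_tlift] tlift_tens)

lemma tensor_eq_0_by_slice1: "(\<And>f. clinear f \<Longrightarrow> slice1 f t = 0) \<Longrightarrow> t = 0"
  using basis_decomp_eq[OF finite_coord_supp1 subset_refl, of t]
  by (simp add: basis_decomp_def clinear_coord tens_zero_right)

lemma tensor_eq_0_by_slice2: "(\<And>g. clinear g \<Longrightarrow> slice2 g t = 0) \<Longrightarrow> t = 0"
  using tensor_eq_0_by_slice1[of "tflip t"] slice2_eq_slice1_tflip tflip_tflip clinear_zero[OF clinear_tflip]
  by metis

definition lmult1 :: "'a::calg \<Rightarrow> ('a, 'b::cvec) tensor \<Rightarrow> ('a, 'b) tensor" where
  "lmult1 e = tmap (\<lambda>y. e * y) (\<lambda>y. y)"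

definition rmult1 :: "'a::calg \<Rightarrow> ('a, 'b::cvec) tensor \<Rightarrow> ('a, 'b) tensor" where
  "rmult1 e = tmap (\<lambda>y. y * e) (\<lambda>y. y)"

definition rmult2 :: "'b::calg \<Rightarrow> ('a::cvec, 'b) tensor \<Rightarrow> ('a, 'b) tensor" where
  "rmult2 e = tmap (\<lambda>y. y) (\<lambda>y. y * e)"

lemma lmult1_tens [simp]: "lmult1 e (x \<otimes> y) = (e * x) \<otimes> y"
  by (simp add: lmult1_def tmap_tens clinear_lmult clinear_ident)

lemma rmult1_tens [simp]: "rmult1 e (x \<otimes> y) = (x * e) \<otimes> y"
  by (simp add: rmult1_def tmap_tens clinear_rmult clinear_ident)

lemma rmult2_tens [simp]: "rmult2 e (x \<otimes> y) = x \<otimes> (y * e)"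
  by (simp add: rmult2_def tmap_tens clinear_rmult clinear_ident)

lemma clinear_lmult1: "clinear (lmult1 e)"
  by (simp add: lmult1_def clinear_tmap clinear_lmult clinear_ident)

lemma clinear_rmult1: "clinear (rmult1 e)"
  by (simp add: rmult1_def clinear_tmap clinear_rmult clinear_ident)

lemma clinear_rmult2: "clinear (rmult2 e)"
  by (simp add: rmult2_def clinear_tmap clinear_rmult clinear_ident)

lemma clinear_rmult1_param: "clinear (\<lambda>b. rmult1 b v)"
proof (rule clinearI)
  show "rmult1 (b + b') v = rmult1 b v + rmult1 b' v" for b b'
    by (rule clinear_tensor_eqI[OF clinear_rmult1 clinear_add_fun[OF clinear_rmult1 clinear_rmult1]])
       (simp add: distrib_left tens_add_left)
  show "rmult1 (c *\<^sub>C b) v = c *\<^sub>C rmult1 b v" for c b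
    by (rule clinear_tensor_eqI[OF clinear_rmult1 clinear_scale_fun[OF clinear_rmult1]])
       (simp add: scaleC_mult_right tens_scale_left)
qed

lemma clinear_rmult2_param: "clinear (\<lambda>b. rmult2 b v)"
proof (rule clinearI)
  show "rmult2 (b + b') v = rmult2 b v + rmult2 b' v" for b b'
    by (rule clinear_tensor_eqI[OF clinear_rmult2 clinear_add_fun[OF clinear_rmult2 clinear_rmult2]])
       (simp add: distrib_left tens_add_right)
  show "rmult2 (c *\<^sub>C b) v = c *\<^sub>C rmult2 b v" for c b
    by (rule clinear_tensor_eqI[OF clinear_rmult2 clinear_scale_fun[OF clinear_rmult2]])
       (simp add: scaleC_mult_right tens_scale_right)
qed

lemma rmult1_rmult2: "rmult1 x (rmult2 y v) = rmult2 y (rmult1 x v)"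
  by (rule clinear_tensor_eqI[OF clinear_compose[OF clinear_rmult1 clinear_rmult2]
        clinear_compose[OF clinear_rmult2 clinear_rmult1]]) simp

lemma tlift_lmult1: "cbilinear \<phi> \<Longrightarrow> tlift \<phi> (lmult1 e X) = tlift (\<lambda>p q. \<phi> (e * p) q) X"
  unfolding lmult1_def by (simp add: tlift_tmap clinear_lmult clinear_ident)

lemma tlift_rmult1: "cbilinear \<phi> \<Longrightarrow> tlift \<phi> (rmult1 e X) = tlift (\<lambda>p q. \<phi> (p * e) q) X"
  unfolding rmult1_def by (simp add: tlift_tmap clinear_rmult clinear_ident)

lemma tlift_rmult2: "cbilinear \<phi> \<Longrightarrow> tlift \<phi> (rmult2 e X) = tlift (\<lambda>p q. \<phi> p (q * e)) X"
  unfolding rmult2_def by (simp add: tlift_tmap clinear_rmult clinear_ident)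

lemma slice1_rmult2: "clinear f \<Longrightarrow> slice1 f (rmult2 b t) = slice1 f t * b"
  by (rule clinear_tensor_eqI[where L="\<lambda>t. slice1 f (rmult2 b t)" and M="\<lambda>t. slice1 f t * b"])
     (simp_all add: clinear_compose[OF clinear_slice1 clinear_rmult2] clinear_mult_right_comp[OF clinear_slice1]
       slice1_tens scaleC_mult_left)

lemma slice2_lmult1: "clinear g \<Longrightarrow> slice2 g (lmult1 e t) = e * slice2 g t"
  by (rule clinear_tensor_eqI[where L="\<lambda>t. slice2 g (lmult1 e t)" and M="\<lambda>t. e * slice2 g t"])
     (simp_all add: clinear_compose[OF clinear_slice2 clinear_lmult1] clinear_mult_left_comp[OF clinear_slice2]
       slice2_tens scaleC_mult_right)

lemma slice2_rmult1: "clinear g \<Longrightarrow> slice2 g (rmult1 d t) = slice2 g t * d"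
  by (rule clinear_tensor_eqI[where L="\<lambda>t. slice2 g (rmult1 d t)" and M="\<lambda>t. slice2 g t * d"])
     (simp_all add: clinear_mult_right_comp[OF clinear_slice2] clinear_compose[OF clinear_slice2 clinear_rmult1]
       slice2_tens scaleC_mult_left)

lemma slice2_rmult2:
  assumes g: "clinear g"
  shows "slice2 g (rmult2 a t) = slice2 (\<lambda>q. g (q * a)) t"
proof -
  have ga: "clinear (\<lambda>q. g (q * a))" by (rule clinear_compose[OF g clinear_rmult])
  show ?thesis
    by (rule clinear_tensor_eqI[where L="\<lambda>t. slice2 g (rmult2 a t)" and M="slice2 (\<lambda>q. g (q * a))"])
       (simp_all add: clinear_compose[OF clinear_slice2[OF g] clinear_rmult2] clinear_slice2[OF ga]
         slice2_tens[OF g] slice2_tens[OF ga])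
qed

definition lmult3 :: "'a::calg \<Rightarrow> (('a, 'b::cvec) tensor, 'c::cvec) tensor \<Rightarrow> (('a, 'b) tensor, 'c) tensor" where
  "lmult3 e = tmap (lmult1 e) (\<lambda>y. y)"

definition rmult3 :: "'a::calg \<Rightarrow> (('a, 'b::cvec) tensor, 'c::cvec) tensor \<Rightarrow> (('a, 'b) tensor, 'c) tensor" where
  "rmult3 e = tmap (rmult1 e) (\<lambda>y. y)"

definition rmult3_mid :: "'b::calg \<Rightarrow> (('a::cvec, 'b) tensor, 'c::cvec) tensor \<Rightarrow> (('a, 'b) tensor, 'c) tensor" where
  "rmult3_mid e = tmap (rmult2 e) (\<lambda>y. y)"

lemma lmult3_tens [simp]: "lmult3 e (u \<otimes> v) = lmult1 e u \<otimes> v"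
  by (simp add: lmult3_def tmap_tens clinear_lmult1 clinear_ident)

lemma rmult3_tens [simp]: "rmult3 e (u \<otimes> v) = rmult1 e u \<otimes> v"
  by (simp add: rmult3_def tmap_tens clinear_rmult1 clinear_ident)

lemma rmult3_mid_tens [simp]: "rmult3_mid e (u \<otimes> v) = rmult2 e u \<otimes> v"
  by (simp add: rmult3_mid_def tmap_tens clinear_rmult2 clinear_ident)

lemma clinear_lmult3: "clinear (lmult3 e)"
  by (simp add: lmult3_def clinear_tmap clinear_lmult1 clinear_ident)

lemma clinear_rmult3: "clinear (rmult3 e)"
  by (simp add: rmult3_def clinear_tmap clinear_rmult1 clinear_ident)

lemma clinear_rmult3_mid: "clinear (rmult3_mid e)"
  by (simp add: rmult3_mid_def clinear_tmap clinear_rmult2 clinear_ident)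

lemma slice2_lmult3: "clinear g \<Longrightarrow> slice2 g (lmult3 e X) = lmult1 e (slice2 g X)"
  by (rule clinear_tensor_eqI[where L="\<lambda>X. slice2 g (lmult3 e X)" and M="\<lambda>X. lmult1 e (slice2 g X)"])
     (simp_all add: clinear_compose[OF clinear_slice2 clinear_lmult3] clinear_compose[OF clinear_lmult1 clinear_slice2]
       slice2_tens clinear_scale[OF clinear_lmult1])

lemma nondegenerate_left_zero: "nondegenerate mul \<Longrightarrow> (\<And>y. mul x y = 0) \<Longrightarrow> x = 0"
  unfolding nondegenerate_def by blast

lemma nondegenerate_right_zero: "nondegenerate mul \<Longrightarrow> (\<And>y. mul y x = 0) \<Longrightarrow> x = 0"
  unfolding nondegenerate_def by blast

lemma nondegenerate_eqI_left:
  assumes "nondegenerate mul" "cbilinear mul" "\<And>z. mul x z = mul y z"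
  shows "x = y"
proof -
  have "mul (x - y) z = 0" for z
    using assms(2,3) clinear_diff[of "\<lambda>x. mul x z"] by (simp add: cbilinear_def)
  then have "x - y = 0" by (rule nondegenerate_left_zero[OF assms(1)])
  then show ?thesis by simp
qed

lemma nondegenerate_eqI_right:
  assumes "nondegenerate mul" "cbilinear mul" "\<And>z. mul z x = mul z y"
  shows "x = y"
proof -
  have "mul z (x - y) = 0" for z
    using assms(2,3) clinear_diff[of "mul z"] by (simp add: cbilinear_def)
  then have "x - y = 0" by (rule nondegenerate_right_zero[OF assms(1)])
  then show ?thesis by simp
qed

lemma cbilinear_times: "cbilinear ((*) :: 'a::calg \<Rightarrow> 'a \<Rightarrow> 'a)"
  by (simp add: cbilinearI clinear_lmult clinear_rmult)

lemma the_elem_memb: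
  assumes "nondegenerate mul" "cbilinear mul" "in_alg mul m"
  shows "m = memb mul (the_elem mul m)"
proof -
  obtain t where t: "m = memb mul t" using assms(3) by (auto simp: in_alg_def)
  have "memb mul t = memb mul t' \<Longrightarrow> t' = t" for t'
    by (rule nondegenerate_eqI_left[OF assms(1,2)]) (simp add: memb_def fun_eq_iff)
  then have "(THE t. m = memb mul t) = t"
    using t by (intro the_equality) auto
  then show ?thesis by (simp add: the_elem_def t)
qed

lemma is_mult_clinear_snd:
  assumes "nondegenerate mul" "cbilinear mul" "is_mult mul m"
  shows "clinear (snd m)"
proof -
  have m: "mul (snd m x) z = mul x (fst m z)" for x z using assms(3) by (simp add: is_mult_def)
  have l: "clinear (\<lambda>x. mul x z)" for z using assms(2) by (simp add: cbilinear_def)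
  show ?thesis
    by (rule clinearI; rule nondegenerate_eqI_left[OF assms(1,2)])
       (simp_all add: m clinear_add[OF l] clinear_scale[OF l])
qed

lemma is_mult_clinear_fst:
  assumes "nondegenerate mul" "cbilinear mul" "is_mult mul m"
  shows "clinear (fst m)"
proof -
  have m: "mul z (fst m x) = mul (snd m z) x" for x z using assms(3) by (simp add: is_mult_def)
  have l: "clinear (mul z)" for z using assms(2) by (simp add: cbilinear_def)
  show ?thesis
    by (rule clinearI; rule nondegenerate_eqI_right[OF assms(1,2)])
       (simp_all add: m clinear_add[OF l] clinear_scale[OF l])
qed

lemma is_mult_fst_snd_commute:
  assumes "nondegenerate mul" "cbilinear mul" "is_mult mul m" "is_mult mul m'"
  shows "fst m (snd m' y) = snd m' (fst m y)"
proof (rule nondegenerate_eqI_right[OF assms(1,2)])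
  fix w
  have a: "mul (snd m w) z = mul w (fst m z)" for w z using assms(3) by (simp add: is_mult_def)
  have b: "snd m' (mul w z) = mul w (snd m' z)" for w z using assms(4) by (simp add: is_mult_def)
  show "mul w (fst m (snd m' y)) = mul w (snd m' (fst m y))"
    by (simp add: a[symmetric] b[symmetric])
qed

lemma tmul_tens: "tmul (x \<otimes> y) (x' \<otimes> y') = (x * x') \<otimes> (y * y')"
proof -
  have "cbilinear (\<lambda>x y. tlift (\<lambda>x' y'. (x * x') \<otimes> (y * y')) t)" for t :: "('a, 'b) tensor"
    by (intro cbilinearI clinear_tlift_fun clinear_tens_left_comp clinear_tens_right_comp clinear_rmult)
  moreover have "cbilinear (\<lambda>x' y'. (x * x') \<otimes> (y * y'))"
    by (intro cbilinearI clinear_tens_left_comp clinear_tens_right_comp clinear_lmult)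
  ultimately show ?thesis by (simp add: tmul_def tlift_tens)
qed

lemma clinear_tmul_left: "clinear (\<lambda>s. tmul s t)"
  unfolding tmul_def
  by (intro clinear_tlift cbilinearI clinear_tlift_fun clinear_tens_left_comp clinear_tens_right_comp
      clinear_lmult clinear_rmult)

lemma clinear_tmul_right: "clinear (\<lambda>t. tmul s t)"
  unfolding tmul_def
  by (intro clinear_tlift_fun clinear_tlift_comp[OF _ clinear_ident] cbilinearI
      clinear_tens_left_comp clinear_tens_right_comp clinear_lmult clinear_rmult)

lemma cbilinear_tmul: "cbilinear tmul"
  by (simp add: cbilinearI clinear_tmul_left clinear_tmul_right)

lemma tmul_tens_right: "tmul s (x \<otimes> y) = rmult1 x (rmult2 y s)"
  by (rule clinear_tensor_eqI[where L="\<lambda>s. tmul s (x \<otimes> y)",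
        OF clinear_tmul_left clinear_compose[OF clinear_rmult1 clinear_rmult2]])
     (simp add: tmul_tens)

lemma tmul_eq_tlift: "tmul v w = tlift (\<lambda>g d. rmult1 g (rmult2 d v)) w"
proof -
  have \<phi>: "cbilinear (\<lambda>g d. rmult1 g (rmult2 d v))"
    by (intro cbilinearI clinear_rmult1_param clinear_compose[OF clinear_rmult1 clinear_rmult2_param])
  show ?thesis
    by (rule clinear_tensor_eqI[OF clinear_tmul_right clinear_tlift[OF \<phi>]])
       (simp add: tlift_tens[OF \<phi>] tmul_tens_right)
qed

lemma tmul_rmult1: "tmul s (rmult1 b t) = rmult1 b (tmul s t)"
  by (rule cbilinear_tensor_eqI[where F="\<lambda>s t. tmul s (rmult1 b t)" and G="\<lambda>s t. rmult1 b (tmul s t)"])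
     (simp_all add: clinear_compose[OF clinear_tmul_right clinear_rmult1] clinear_compose[OF clinear_rmult1 clinear_tmul_right]
       clinear_tmul_left clinear_compose[OF clinear_rmult1 clinear_tmul_left] tmul_tens mult.assoc)

lemma tmul_rmult2: "tmul s (rmult2 b t) = rmult2 b (tmul s t)"
  by (rule cbilinear_tensor_eqI[where F="\<lambda>s t. tmul s (rmult2 b t)" and G="\<lambda>s t. rmult2 b (tmul s t)"])
     (simp_all add: clinear_compose[OF clinear_tmul_right clinear_rmult2] clinear_compose[OF clinear_rmult2 clinear_tmul_right]
       clinear_tmul_left clinear_compose[OF clinear_rmult2 clinear_tmul_left] tmul_tens mult.assoc)

lemma tmul_rmult1_left: "tmul (rmult1 e s) t = tmul s (lmult1 e t)"
  by (rule cbilinear_tensor_eqI[where F="\<lambda>s t. tmul (rmult1 e s) t" and G="\<lambda>s t. tmul s (lmult1 e t)"])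
     (simp_all add: clinear_compose[OF clinear_tmul_right clinear_lmult1] clinear_tmul_right
       clinear_compose[OF clinear_tmul_left clinear_rmult1] clinear_tmul_left tmul_tens mult.assoc)

lemma slice2_tmul_tens:
  assumes g: "clinear g"
  shows "slice2 g (tmul (x \<otimes> y) d) = x * slice2 (\<lambda>q. g (y * q)) d"
proof -
  have gy: "clinear (\<lambda>q. g (y * q))" by (rule clinear_compose[OF g clinear_lmult])
  show ?thesis
    by (rule clinear_tensor_eqI[where L="\<lambda>d. slice2 g (tmul (x \<otimes> y) d)" and M="\<lambda>d. x * slice2 (\<lambda>q. g (y * q)) d"])
       (simp_all add: clinear_compose[OF clinear_slice2[OF g] clinear_tmul_right]
         clinear_mult_left_comp[OF clinear_slice2[OF gy]] tmul_tens slice2_tens[OF g] slice2_tens[OF gy]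
         scaleC_mult_right)
qed

lemma slice1_tmul_tens:
  assumes f: "clinear f"
  shows "slice1 f (tmul d (x \<otimes> y)) = slice1 (\<lambda>p. f (p * x)) d * y"
proof -
  have fx: "clinear (\<lambda>p. f (p * x))" by (rule clinear_compose[OF f clinear_rmult])
  show ?thesis
    by (rule clinear_tensor_eqI[where L="\<lambda>d. slice1 f (tmul d (x \<otimes> y))" and M="\<lambda>d. slice1 (\<lambda>p. f (p * x)) d * y"])
       (simp_all add: clinear_compose[OF clinear_slice1[OF f] clinear_tmul_left]
         clinear_mult_right_comp[OF clinear_slice1[OF fx]] tmul_tens slice1_tens[OF f] slice1_tens[OF fx]
         scaleC_mult_left)
qed

text \<open>Slice the tensor and use nondegeneracy of \<open>A\<close> on the slices.\<close>

lemma tensor_eq_0_by_rmult2: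
  fixes t :: "('b::cvec, 'a::calg) tensor"
  assumes "nondegenerate ((*) :: 'a \<Rightarrow> 'a \<Rightarrow> 'a)" "\<And>b. rmult2 b t = 0"
  shows "t = 0"
proof (rule tensor_eq_0_by_slice1)
  fix f :: "'b \<Rightarrow> complex" assume f: "clinear f"
  show "slice1 f t = 0"
  proof (rule nondegenerate_left_zero[OF assms(1)])
    fix y
    have "slice1 f t * y = slice1 f (rmult2 y t)" by (rule slice1_rmult2[OF f, symmetric])
    then show "slice1 f t * y = 0" by (simp add: assms(2) clinear_zero[OF clinear_slice1[OF f]])
  qed
qed

lemma tensor_eq_by_rmult2:
  fixes u v :: "('b::cvec, 'a::calg) tensor"
  assumes "nondegenerate ((*) :: 'a \<Rightarrow> 'a \<Rightarrow> 'a)" "\<And>b. rmult2 b u = rmult2 b v"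
  shows "u = v"
  using tensor_eq_0_by_rmult2[OF assms(1), of "u - v"] assms(2) by (simp add: clinear_diff[OF clinear_rmult2])

lemma tensor_eq_0_by_lmult1:
  fixes t :: "('a::calg, 'b::cvec) tensor"
  assumes "nondegenerate ((*) :: 'a \<Rightarrow> 'a \<Rightarrow> 'a)" "\<And>e. lmult1 e t = 0"
  shows "t = 0"
proof (rule tensor_eq_0_by_slice2)
  fix g :: "'b \<Rightarrow> complex" assume g: "clinear g"
  show "slice2 g t = 0"
  proof (rule nondegenerate_right_zero[OF assms(1)])
    fix e
    have "e * slice2 g t = slice2 g (lmult1 e t)" by (rule slice2_lmult1[OF g, symmetric])
    then show "e * slice2 g t = 0" by (simp add: assms(2) clinear_zero[OF clinear_slice2[OF g]])
  qed
qed

lemma tensor3_eq_by_lmult3: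
  fixes X Y :: "(('a::calg, 'b::cvec) tensor, 'c::cvec) tensor"
  assumes "nondegenerate ((*) :: 'a \<Rightarrow> 'a \<Rightarrow> 'a)" "\<And>e. lmult3 e X = lmult3 e Y"
  shows "X = Y"
proof -
  have "X - Y = 0"
  proof (rule tensor_eq_0_by_slice2)
    fix g :: "'c \<Rightarrow> complex" assume g: "clinear g"
    show "slice2 g (X - Y) = 0"
      by (rule tensor_eq_0_by_lmult1[OF assms(1)])
         (simp add: slice2_lmult3[OF g, symmetric] assms(2) clinear_diff[OF clinear_lmult3]
           clinear_zero[OF clinear_slice2[OF g]])
  qed
  then show ?thesis by simp
qed

lemma tensor_eq_0_by_tmul_right:
  fixes d :: "('a::calg, 'a) tensor"
  assumes nd: "nondegenerate ((*) :: 'a \<Rightarrow> 'a \<Rightarrow> 'a)" and d: "\<And>s. tmul d s = 0"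
  shows "d = 0"
proof (rule tensor_eq_0_by_slice2)
  fix g :: "'a \<Rightarrow> complex" assume g: "clinear g"
  have "f (slice2 g d * x) = 0" if f: "clinear f" for f :: "'a \<Rightarrow> complex" and x
  proof -
    have fx: "clinear (\<lambda>p. f (p * x))" by (rule clinear_compose[OF f clinear_rmult])
    have "slice1 (\<lambda>p. f (p * x)) d * y = slice1 f (tmul d (x \<otimes> y))" for y
      by (rule slice1_tmul_tens[OF f, symmetric])
    then have "slice1 (\<lambda>p. f (p * x)) d * y = 0" for y
      by (simp add: d clinear_zero[OF clinear_slice1[OF f]])
    then have "slice1 (\<lambda>p. f (p * x)) d = 0" by (rule nondegenerate_left_zero[OF nd])
    then show ?thesis
      using slice1_slice2_swap[OF fx g, of d] clinear_zero[OF g] by simp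
  qed
  then have "slice2 g d * x = 0" for x by (rule vector_eq_0_by_functionals)
  then show "slice2 g d = 0" by (rule nondegenerate_left_zero[OF nd])
qed

lemma tensor_eq_0_by_tmul_left:
  fixes d :: "('a::calg, 'a) tensor"
  assumes nd: "nondegenerate ((*) :: 'a \<Rightarrow> 'a \<Rightarrow> 'a)" and d: "\<And>s. tmul s d = 0"
  shows "d = 0"
proof (rule tensor_eq_0_by_slice1)
  fix f :: "'a \<Rightarrow> complex" assume f: "clinear f"
  have "g (y * slice1 f d) = 0" if g: "clinear g" for g :: "'a \<Rightarrow> complex" and y
  proof -
    have gy: "clinear (\<lambda>q. g (y * q))" by (rule clinear_compose[OF g clinear_lmult])
    have "x * slice2 (\<lambda>q. g (y * q)) d = slice2 g (tmul (x \<otimes> y) d)" for x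
      by (rule slice2_tmul_tens[OF g, symmetric])
    then have "x * slice2 (\<lambda>q. g (y * q)) d = 0" for x
      by (simp add: d clinear_zero[OF clinear_slice2[OF g]])
    then have "slice2 (\<lambda>q. g (y * q)) d = 0" by (rule nondegenerate_right_zero[OF nd])
    then show ?thesis
      using slice1_slice2_swap[OF f gy, of d] clinear_zero[OF f] by simp
  qed
  then have "y * slice1 f d = 0" for y by (rule vector_eq_0_by_functionals)
  then show "slice1 f d = 0" by (rule nondegenerate_right_zero[OF nd])
qed

lemma nondegenerate_tmul:
  assumes "nondegenerate ((*) :: 'a \<Rightarrow> 'a \<Rightarrow> 'a::calg)"
  shows "nondegenerate (tmul :: ('a, 'a) tensor \<Rightarrow> _)"
  using tensor_eq_0_by_tmul_right[OF assms] tensor_eq_0_by_tmul_left[OF assms]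
  unfolding nondegenerate_def by blast

section \<open>Regular multiplier Hopf algebras\<close>

text \<open>In Sweedler notation \<open>D1 \<Delta> a b = a\<^sub>(\<^sub>1\<^sub>) \<otimes> a\<^sub>(\<^sub>2\<^sub>) b\<close>, \<open>D2 \<Delta> e a = e a\<^sub>(\<^sub>1\<^sub>) \<otimes> a\<^sub>(\<^sub>2\<^sub>)\<close> and
  \<open>D3 \<Delta> a d = a\<^sub>(\<^sub>1\<^sub>) d \<otimes> a\<^sub>(\<^sub>2\<^sub>)\<close>.  Identities between them are proved by multiplying with
  arbitrary elements of \<open>A \<otimes> A\<close> (or of \<open>A\<close> on one leg) and using nondegeneracy.\<close>

locale regular_mult_hopf_alg =
  fixes \<Delta> :: "'a::calg \<Rightarrow> ('a, 'a) tensor mult"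
  assumes regular: "regular_mult_hopf \<Delta>"
begin

lemma A_nondegenerate: "nondegenerate ((*) :: 'a \<Rightarrow> 'a \<Rightarrow> 'a)"
  using regular by (simp add: regular_mult_hopf_def)

lemma comult_hom: "hom_to_mult tmul \<Delta>"
  using regular by (simp add: regular_mult_hopf_def)

lemma coassoc:
  "tlift (\<lambda>p q. D2 \<Delta> a p \<otimes> q) (D1 \<Delta> b c) = tassoc (tlift (\<lambda>u v. u \<otimes> D1 \<Delta> v c) (D2 \<Delta> a b))"
  using regular by (simp add: regular_mult_hopf_def)

lemma bij_D2: "bij (tlift (D2 \<Delta>))"
  using regular by (simp add: regular_mult_hopf_def)

lemma snd_comult_add: "snd (\<Delta> (a + b)) s = snd (\<Delta> a) s + snd (\<Delta> b) s"
  using comult_hom by (simp add: hom_to_mult_def madd_def)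

lemma snd_comult_scale: "snd (\<Delta> (c *\<^sub>C a)) s = c *\<^sub>C snd (\<Delta> a) s"
  using comult_hom by (simp add: hom_to_mult_def mscale_def)

lemma snd_comult_mult: "snd (\<Delta> (a * b)) s = snd (\<Delta> b) (snd (\<Delta> a) s)"
  using comult_hom by (simp add: hom_to_mult_def mcomp_def)

lemma tensor_eqI_tmul: "(\<And>s. tmul s X = tmul s Y) \<Longrightarrow> X = (Y :: ('a, 'a) tensor)"
  by (rule nondegenerate_eqI_right[OF nondegenerate_tmul[OF A_nondegenerate] cbilinear_tmul])

lemma memb_the_elem_tmul: "in_alg tmul m \<Longrightarrow> m = memb tmul (the_elem tmul (m :: ('a, 'a) tensor mult))"
  by (rule the_elem_memb[OF nondegenerate_tmul[OF A_nondegenerate] cbilinear_tmul])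

lemma tmul_D1: "tmul s (D1 \<Delta> a b) = rmult2 b (snd (\<Delta> a) s)"
proof -
  have "snd (memb tmul (D1 \<Delta> a b)) s = snd (mcomp (\<Delta> a) (one_tens b)) s"
    using regular memb_the_elem_tmul[of "mcomp (\<Delta> a) (one_tens b)"]
    by (simp add: D1_def regular_mult_hopf_def)
  then show ?thesis by (simp add: memb_def mcomp_def one_tens_def rmult2_def id_def)
qed

lemma tmul_D2: "tmul s (D2 \<Delta> e a) = snd (\<Delta> a) (rmult1 e s)"
proof -
  have "snd (memb tmul (D2 \<Delta> e a)) s = snd (mcomp (tens_one e) (\<Delta> a)) s"
    using regular memb_the_elem_tmul[of "mcomp (tens_one e) (\<Delta> a)"]
    by (simp add: D2_def regular_mult_hopf_def)
  then show ?thesis by (simp add: memb_def mcomp_def tens_one_def rmult1_def id_def)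
qed

lemma tmul_D3: "tmul s (D3 \<Delta> a d) = rmult1 d (snd (\<Delta> a) s)"
proof -
  have "snd (memb tmul (D3 \<Delta> a d)) s = snd (mcomp (\<Delta> a) (tens_one d)) s"
    using regular memb_the_elem_tmul[of "mcomp (\<Delta> a) (tens_one d)"]
    by (simp add: D3_def regular_mult_hopf_def)
  then show ?thesis by (simp add: memb_def mcomp_def tens_one_def rmult1_def id_def)
qed

lemma clinear_D1_left: "clinear (\<lambda>a. D1 \<Delta> a b)"
  by (rule clinearI; rule tensor_eqI_tmul)
     (simp_all add: tmul_D1 snd_comult_add snd_comult_scale clinear_add[OF clinear_rmult2]
       clinear_scale[OF clinear_rmult2] clinear_add[OF clinear_tmul_right] clinear_scale[OF clinear_tmul_right])

lemma clinear_D1_right: "clinear (\<lambda>b. D1 \<Delta> a b)"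
  by (rule clinearI; rule tensor_eqI_tmul)
     (simp_all add: tmul_D1 clinear_add[OF clinear_rmult2_param] clinear_scale[OF clinear_rmult2_param]
       clinear_add[OF clinear_tmul_right] clinear_scale[OF clinear_tmul_right])

lemma lmult1_D1: "lmult1 e (D1 \<Delta> p c) = rmult2 c (D2 \<Delta> e p)"
  by (rule tensor_eqI_tmul) (simp add: tmul_rmult1_left[symmetric] tmul_D1 tmul_D2 tmul_rmult2)

lemma lmult1_D3: "lmult1 e (D3 \<Delta> p f) = rmult1 f (D2 \<Delta> e p)"
  by (rule tensor_eqI_tmul) (simp add: tmul_rmult1_left[symmetric] tmul_D3 tmul_D2 tmul_rmult1)

lemma rmult1_D1: "rmult1 d (D1 \<Delta> c a) = rmult2 a (D3 \<Delta> c d)"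
  by (rule tensor_eqI_tmul) (simp add: tmul_rmult1 tmul_rmult2 tmul_D1 tmul_D3 rmult1_rmult2)

lemma D1_mult: "D1 \<Delta> (r * c) b = tlift (\<lambda>g d. rmult1 g (D1 \<Delta> r d)) (D1 \<Delta> c b)"
proof (rule tensor_eqI_tmul)
  fix s
  have "tmul s (D1 \<Delta> (r * c) b) = tmul (snd (\<Delta> r) s) (D1 \<Delta> c b)"
    by (simp add: tmul_D1 snd_comult_mult)
  also have "\<dots> = tlift (\<lambda>g d. rmult1 g (rmult2 d (snd (\<Delta> r) s))) (D1 \<Delta> c b)"
    by (rule tmul_eq_tlift)
  also have "\<dots> = tmul s (tlift (\<lambda>g d. rmult1 g (D1 \<Delta> r d)) (D1 \<Delta> c b))"
    by (simp add: tmul_rmult1 tmul_D1 tlift_fun_linear[OF clinear_tmul_right])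
  finally show "tmul s (D1 \<Delta> (r * c) b) = tmul s (tlift (\<lambda>g d. rmult1 g (D1 \<Delta> r d)) (D1 \<Delta> c b))" .
qed

lemma cbilinear_tassoc_inner: "cbilinear (\<lambda>y z. (x \<otimes> y) \<otimes> z)"
  by (intro cbilinearI clinear_tens_left_comp clinear_tens_right_comp clinear_ident)

lemma tassoc_tlift:
  "tassoc (tlift (\<lambda>u v. u \<otimes> \<psi> v) X) = tlift (\<lambda>u v. tlift (\<lambda>y z. (u \<otimes> y) \<otimes> z) (\<psi> v)) X"
proof -
  have \<phi>: "cbilinear (\<lambda>x u. tlift (\<lambda>y z. (x \<otimes> y) \<otimes> z) u)"
    by (intro cbilinearI clinear_tlift[OF cbilinear_tassoc_inner] clinear_tlift_fun clinear_tens_left_comp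
        clinear_ident)
  show ?thesis
    unfolding tassoc_def by (simp add: tlift_fun_linear[OF clinear_tlift[OF \<phi>]] tlift_tens[OF \<phi>])
qed

lemma coassoc_D2_D1:
  "tlift (\<lambda>p q. D2 \<Delta> e p \<otimes> q) (D1 \<Delta> a c) =
   tlift (\<lambda>u v. tlift (\<lambda>y z. (u \<otimes> y) \<otimes> z) (D1 \<Delta> v c)) (D2 \<Delta> e a)"
  using coassoc[of e a c] by (simp add: tassoc_tlift)

lemma coassoc_D3_D1:
  "tlift (\<lambda>\<alpha> \<beta>. D3 \<Delta> \<alpha> f \<otimes> \<beta>) (D1 \<Delta> u w) =
   tlift (\<lambda>a v. tlift (\<lambda>y z. (a \<otimes> y) \<otimes> z) (D1 \<Delta> v w)) (D3 \<Delta> u f)"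
proof (rule tensor3_eq_by_lmult3[OF A_nondegenerate])
  fix e
  define \<Psi> where "\<Psi> = (\<lambda>(a::'a) v. tlift (\<lambda>y z. (a \<otimes> y) \<otimes> z) (D1 \<Delta> v w))"
  have \<Psi>: "cbilinear \<Psi>"
    unfolding \<Psi>_def
    by (intro cbilinearI clinear_tlift_fun clinear_tlift_comp[OF cbilinear_tassoc_inner] clinear_D1_left
        clinear_tens_left_comp clinear_ident)
  have "lmult3 e (tlift (\<lambda>\<alpha> \<beta>. D3 \<Delta> \<alpha> f \<otimes> \<beta>) (D1 \<Delta> u w))
      = rmult3 f (tlift (\<lambda>\<alpha> \<beta>. D2 \<Delta> e \<alpha> \<otimes> \<beta>) (D1 \<Delta> u w))"
    by (simp add: tlift_fun_linear[OF clinear_lmult3] tlift_fun_linear[OF clinear_rmult3] lmult1_D3)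
  also have "\<dots> = tlift (\<lambda>a v. \<Psi> (a * f) v) (D2 \<Delta> e u)"
    by (simp add: coassoc_D2_D1 \<Psi>_def tlift_fun_linear[OF clinear_rmult3])
  also have "\<dots> = tlift \<Psi> (lmult1 e (D3 \<Delta> u f))"
    by (simp add: lmult1_D3 tlift_rmult1[OF \<Psi>])
  also have "\<dots> = tlift (\<lambda>a v. \<Psi> (e * a) v) (D3 \<Delta> u f)"
    by (simp add: tlift_lmult1[OF \<Psi>])
  also have "\<dots> = lmult3 e (tlift \<Psi> (D3 \<Delta> u f))"
    by (simp add: \<Psi>_def tlift_fun_linear[OF clinear_lmult3])
  finally show "lmult3 e (tlift (\<lambda>\<alpha> \<beta>. D3 \<Delta> \<alpha> f \<otimes> \<beta>) (D1 \<Delta> u w)) =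
      lmult3 e (tlift (\<lambda>a v. tlift (\<lambda>y z. (a \<otimes> y) \<otimes> z) (D1 \<Delta> v w)) (D3 \<Delta> u f))"
    by (simp add: \<Psi>_def)
qed

lemma coassoc_D1_D1:
  "tlift (\<lambda>q r. tlift (\<lambda>y z. (q \<otimes> y) \<otimes> z) (D1 \<Delta> r b)) (D1 \<Delta> p c) =
   tlift (\<lambda>g d. tlift (\<lambda>u v. D1 \<Delta> u g \<otimes> v) (D1 \<Delta> p d)) (D1 \<Delta> c b)"
proof (rule tensor3_eq_by_lmult3[OF A_nondegenerate])
  fix e
  define \<Psi> where "\<Psi> = (\<lambda>(q::'a) r. tlift (\<lambda>y z. (q \<otimes> y) \<otimes> z) (D1 \<Delta> r b))"
  have \<Psi>: "cbilinear \<Psi>"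
    unfolding \<Psi>_def
    by (intro cbilinearI clinear_tlift_fun clinear_tlift_comp[OF cbilinear_tassoc_inner] clinear_D1_left
        clinear_tens_left_comp clinear_ident)
  have "lmult3 e (tlift \<Psi> (D1 \<Delta> p c)) = tlift (\<lambda>q r. \<Psi> (e * q) r) (D1 \<Delta> p c)"
    by (simp add: \<Psi>_def tlift_fun_linear[OF clinear_lmult3])
  also have "\<dots> = tlift \<Psi> (lmult1 e (D1 \<Delta> p c))"
    by (simp add: tlift_lmult1[OF \<Psi>])
  also have "\<dots> = tlift (\<lambda>q r. tlift (\<lambda>g d. tlift (\<lambda>y z. (q \<otimes> (y * g)) \<otimes> z) (D1 \<Delta> r d)) (D1 \<Delta> c b))
      (D2 \<Delta> e p)"
    unfolding lmult1_D1 tlift_rmult2[OF \<Psi>]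
    by (simp add: \<Psi>_def D1_mult tlift_fun_linear[OF clinear_tlift[OF cbilinear_tassoc_inner]]
        tlift_rmult1[OF cbilinear_tassoc_inner])
  also have "\<dots> = tlift (\<lambda>g d. rmult3_mid g (tlift (\<lambda>q r. tlift (\<lambda>y z. (q \<otimes> y) \<otimes> z) (D1 \<Delta> r d)) (D2 \<Delta> e p)))
      (D1 \<Delta> c b)"
    by (subst tlift_swap) (simp add: tlift_fun_linear[OF clinear_rmult3_mid])
  also have "\<dots> = lmult3 e (tlift (\<lambda>g d. tlift (\<lambda>u v. D1 \<Delta> u g \<otimes> v) (D1 \<Delta> p d)) (D1 \<Delta> c b))"
    by (simp add: coassoc_D2_D1[symmetric] tlift_fun_linear[OF clinear_rmult3_mid]
        tlift_fun_linear[OF clinear_lmult3] lmult1_D1)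
  finally show "lmult3 e (tlift (\<lambda>q r. tlift (\<lambda>y z. (q \<otimes> y) \<otimes> z) (D1 \<Delta> r b)) (D1 \<Delta> p c)) =
      lmult3 e (tlift (\<lambda>g d. tlift (\<lambda>u v. D1 \<Delta> u g \<otimes> v) (D1 \<Delta> p d)) (D1 \<Delta> c b))"
    by (simp add: \<Psi>_def)
qed

lemma sum_slice2_D1_eq_0:
  fixes xs :: "(('a \<Rightarrow> complex) \<times> 'a) list"
  assumes lin: "\<And>p. p \<in> set xs \<Longrightarrow> clinear (fst p)"
    and vanish: "\<And>e. (\<Sum>p\<leftarrow>xs. fst p (e * snd p)) = 0"
  shows "(\<Sum>p\<leftarrow>xs. slice2 (\<lambda>q. fst p (h * q)) (D1 \<Delta> c (snd p))) = 0"
proof (rule nondegenerate_left_zero[OF A_nondegenerate])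
  fix d
  have "(\<Sum>p\<leftarrow>xs. slice2 (\<lambda>q. fst p (h * q)) (D1 \<Delta> c (snd p))) * d
      = (\<Sum>p\<leftarrow>xs. slice2 (\<lambda>q. fst p (h * q)) (D1 \<Delta> c (snd p)) * d)"
    by (induction xs) (simp_all add: distrib_right)
  also have "\<dots> = (\<Sum>p\<leftarrow>xs. slice2 (\<lambda>q. fst p (h * (q * snd p))) (D3 \<Delta> c d))"
  proof (rule arg_cong[where f=sum_list], rule map_cong[OF refl])
    fix p assume p: "p \<in> set xs"
    have g: "clinear (\<lambda>q. fst p (h * q))" by (rule clinear_compose[OF lin[OF p] clinear_lmult])
    show "slice2 (\<lambda>q. fst p (h * q)) (D1 \<Delta> c (snd p)) * d = slice2 (\<lambda>q. fst p (h * (q * snd p))) (D3 \<Delta> c d)"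
      by (simp add: slice2_rmult1[OF g, symmetric] rmult1_D1 slice2_rmult2[OF g])
  qed
  also have "\<dots> = slice2 (\<lambda>q. \<Sum>p\<leftarrow>xs. fst p (h * (q * snd p))) (D3 \<Delta> c d)"
    by (rule slice2_fun_sum_list)
  also have "\<dots> = 0"
    using vanish by (simp add: mult.assoc[symmetric] slice2_def cv.scale_zero_left tlift_fun_zero)
  finally show "(\<Sum>p\<leftarrow>xs. slice2 (\<lambda>q. fst p (h * q)) (D1 \<Delta> c (snd p))) * d = 0" .
qed

end

locale mult_hopf_antipode = regular_mult_hopf_alg +
  fixes S :: "'a::calg \<Rightarrow> 'a"
  assumes antipode: "is_antipode \<Delta> S"
begin

definition counit :: "'a \<Rightarrow> complex" where
  "counit = (SOME \<epsilon>. is_counit \<Delta> \<epsilon> \<and>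
     (\<forall>a b. tlift (\<lambda>p q. S p * q) (D1 \<Delta> a b) = \<epsilon> a *\<^sub>C b) \<and>
     (\<forall>a b. tlift (\<lambda>p q. p * S q) (D2 \<Delta> a b) = \<epsilon> b *\<^sub>C a))"

lemma counit_spec:
  "is_counit \<Delta> counit \<and>
     (\<forall>a b. tlift (\<lambda>p q. S p * q) (D1 \<Delta> a b) = counit a *\<^sub>C b) \<and>
     (\<forall>a b. tlift (\<lambda>p q. p * S q) (D2 \<Delta> a b) = counit b *\<^sub>C a)"
proof -
  have "\<exists>\<epsilon>. is_counit \<Delta> \<epsilon> \<and>
     (\<forall>a b. tlift (\<lambda>p q. S p * q) (D1 \<Delta> a b) = \<epsilon> a *\<^sub>C b) \<and>
     (\<forall>a b. tlift (\<lambda>p q. p * S q) (D2 \<Delta> a b) = \<epsilon> b *\<^sub>C a)"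
    using antipode by (simp add: is_antipode_def)
  then show ?thesis unfolding counit_def by (rule someI_ex)
qed

lemma clinear_antipode: "clinear S"
  using antipode by (simp add: is_antipode_def)

lemma clinear_counit: "clinear counit"
  using counit_spec by (simp add: is_counit_def)

lemma counit_D1: "tlift (\<lambda>p q. counit p *\<^sub>C q) (D1 \<Delta> a b) = a * b"
  using counit_spec by (simp add: is_counit_def)

lemma counit_D2: "tlift (\<lambda>p q. counit q *\<^sub>C p) (D2 \<Delta> a b) = a * b"
  using counit_spec by (simp add: is_counit_def)

lemma antipode_D1: "tlift (\<lambda>p q. S p * q) (D1 \<Delta> a b) = counit a *\<^sub>C b"
  using counit_spec by simp

lemma antipode_D2: "tlift (\<lambda>p q. p * S q) (D2 \<Delta> a b) = counit b *\<^sub>C a"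
  using counit_spec by simp

lemma counit_D3: "tlift (\<lambda>p q. counit q *\<^sub>C p) (D3 \<Delta> u f) = u * f"
proof (rule nondegenerate_eqI_right[OF A_nondegenerate cbilinear_times])
  fix e
  have \<phi>: "cbilinear (\<lambda>p q. counit q *\<^sub>C p)"
    by (intro cbilinearI clinear_scale_fun clinear_scale_by_fun clinear_counit clinear_ident)
  have "e * tlift (\<lambda>p q. counit q *\<^sub>C p) (D3 \<Delta> u f) = tlift (\<lambda>p q. counit q *\<^sub>C p) (lmult1 e (D3 \<Delta> u f))"
    by (simp add: tlift_fun_linear[OF clinear_lmult] scaleC_mult_right tlift_lmult1[OF \<phi>])
  also have "\<dots> = tlift (\<lambda>p q. counit q *\<^sub>C p) (D2 \<Delta> e u) * f"
    by (simp add: lmult1_D3 tlift_rmult1[OF \<phi>] tlift_fun_linear[OF clinear_rmult] scaleC_mult_left)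
  also have "\<dots> = e * (u * f)" by (simp add: counit_D2 mult.assoc)
  finally show "e * tlift (\<lambda>p q. counit q *\<^sub>C p) (D3 \<Delta> u f) = e * (u * f)" .
qed

lemma antipode_D3_D1: "tlift (\<lambda>\<alpha> \<beta>. tlift (\<lambda>a b. a \<otimes> (S b * \<beta>)) (D3 \<Delta> \<alpha> f)) (D1 \<Delta> u w) = (u * f) \<otimes> w"
proof -
  have \<psi>: "cbilinear (\<lambda>a b. a \<otimes> (S b * \<beta>))" for \<beta>
    by (intro cbilinearI clinear_tens_left_comp clinear_tens_right_comp clinear_mult_right_comp
        clinear_compose[OF clinear_antipode] clinear_ident)
  define \<Theta> where "\<Theta> = (\<lambda>(X::('a, 'a) tensor) \<beta>. tlift (\<lambda>a b. a \<otimes> (S b * \<beta>)) X)"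
  have \<Theta>: "cbilinear \<Theta>"
    unfolding \<Theta>_def
    by (intro cbilinearI clinear_tlift[OF \<psi>] clinear_tlift_fun clinear_tens_right_comp clinear_lmult)
  have "tlift (\<lambda>\<alpha> \<beta>. tlift (\<lambda>a b. a \<otimes> (S b * \<beta>)) (D3 \<Delta> \<alpha> f)) (D1 \<Delta> u w)
      = tlift \<Theta> (tlift (\<lambda>\<alpha> \<beta>. D3 \<Delta> \<alpha> f \<otimes> \<beta>) (D1 \<Delta> u w))"
    by (simp add: tlift_tlift_tens[OF \<Theta>]) (simp add: \<Theta>_def)
  also have "\<dots> = tlift (\<lambda>a v. tlift (\<lambda>y z. a \<otimes> (S y * z)) (D1 \<Delta> v w)) (D3 \<Delta> u f)"
    by (simp add: coassoc_D3_D1 tlift_fun_linear[OF clinear_tlift[OF \<Theta>]] tlift_tens[OF \<Theta>])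
       (simp add: \<Theta>_def tlift_tens[OF \<psi>])
  also have "\<dots> = tlift (\<lambda>a v. (counit v *\<^sub>C a) \<otimes> w) (D3 \<Delta> u f)"
    by (simp add: tlift_fun_linear[OF clinear_tens_right, symmetric] antipode_D1 tens_scale_left
        tens_scale_right)
  also have "\<dots> = (u * f) \<otimes> w"
    by (simp add: tlift_fun_linear[OF clinear_tens_left, symmetric] counit_D3)
  finally show ?thesis .
qed

text \<open>Although \<open>A\<close> need not have a unit, functionals behave as if it had local units:
  choose \<open>c\<close> with \<open>\<epsilon>(c) = 1\<close>, write \<open>a = S(c\<^sub>(\<^sub>1\<^sub>)) c\<^sub>(\<^sub>2\<^sub>) a\<close>, and expand the first leg of
  \<open>\<Delta>(c)(1 \<otimes> a)\<close> in a finite part of a basis; the remaining sums only involve the functionals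
  \<open>e \<mapsto> \<Sum>\<^sub>i f\<^sub>i (e a\<^sub>i)\<close>, since \<open>\<Delta>(c)(1 \<otimes> a) d = \<Delta>(c)(d \<otimes> 1)(1 \<otimes> a)\<close>.  If \<open>\<epsilon> = 0\<close> then
  \<open>A A = 0\<close> by the counit property, so \<open>A = 0\<close>.\<close>

lemma sum_functionals_eq_0_if_left_mult:
  fixes xs :: "(('a \<Rightarrow> complex) \<times> 'a) list"
  assumes lin: "\<And>p. p \<in> set xs \<Longrightarrow> clinear (fst p)"
    and vanish: "\<And>e. (\<Sum>p\<leftarrow>xs. fst p (e * snd p)) = 0"
  shows "(\<Sum>p\<leftarrow>xs. fst p (snd p)) = 0"
proof (cases "\<forall>c. counit c = 0")
  case True
  have "c * a = 0" for c a :: 'a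
    using counit_D1[of c a] True by (simp add: cv.scale_zero_left tlift_fun_zero)
  then have "a = 0" for a :: 'a by (rule nondegenerate_right_zero[OF A_nondegenerate])
  then have "fst p (snd p) = 0" if "p \<in> set xs" for p
    using clinear_zero[OF lin[OF that]] by metis
  then show ?thesis by (induction xs) auto
next
  case False
  then obtain c0 where c0: "counit c0 \<noteq> 0" by blast
  define c where "c = inverse (counit c0) *\<^sub>C c0"
  have counit_c: "counit c = 1"
    using c0 by (simp add: c_def clinear_scale[OF clinear_counit] scaleC_complex_def)
  define W where "W = (\<lambda>p::('a \<Rightarrow> complex) \<times> 'a. D1 \<Delta> c (snd p))"
  have slices_vanish: "(\<Sum>p\<leftarrow>xs. slice2 (\<lambda>q. fst p (h * q)) (W p)) = 0" for h
    unfolding W_def by (rule sum_slice2_D1_eq_0[OF lin vanish])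
  define F where "F = (\<Union>p\<in>set xs. coord_supp1 (W p))"
  have "fst p (snd p) = (\<Sum>b\<in>F. coord b (slice2 (\<lambda>q. fst p (S b * q)) (W p)))" if p: "p \<in> set xs" for p
  proof -
    have l: "clinear (fst p)" by (rule lin[OF p])
    have \<phi>: "cbilinear (\<lambda>u q. fst p (S u * q))"
      by (intro cbilinearI clinear_compose[OF l] clinear_mult_left_comp clinear_mult_right_comp
          clinear_ident clinear_compose[OF clinear_antipode])
    have "fst p (snd p) = tlift (\<lambda>u q. fst p (S u * q)) (W p)"
      by (simp add: W_def antipode_D1 tlift_fun_linear[OF l, symmetric] counit_c)
    also have "\<dots> = tlift (\<lambda>u q. fst p (S u * q)) (basis_decomp F (W p))"
      by (subst basis_decomp_eq) (use p in \<open>auto simp: F_def finite_coord_supp1\<close>)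
    also have "\<dots> = (\<Sum>b\<in>F. coord b (slice2 (\<lambda>q. fst p (S b * q)) (W p)))"
      by (simp add: tlift_basis_decomp[OF \<phi>] slice1_slice2_swap[OF clinear_coord clinear_compose[OF l clinear_lmult]])
    finally show ?thesis .
  qed
  then have "(\<Sum>p\<leftarrow>xs. fst p (snd p)) = (\<Sum>p\<leftarrow>xs. \<Sum>b\<in>F. coord b (slice2 (\<lambda>q. fst p (S b * q)) (W p)))"
    by (intro arg_cong[where f=sum_list] map_cong) auto
  also have "\<dots> = (\<Sum>b\<in>F. coord b (\<Sum>p\<leftarrow>xs. slice2 (\<lambda>q. fst p (S b * q)) (W p)))"
    by (induction xs) (simp_all add: sum.distrib clinear_add[OF clinear_coord] clinear_zero[OF clinear_coord])
  also have "\<dots> = 0" by (simp add: slices_vanish clinear_zero[OF clinear_coord])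
  finally show ?thesis .
qed

end

locale inner_action_setting = mult_hopf_antipode +
  fixes act :: "'a \<Rightarrow> 'r::calg \<Rightarrow> 'r"
    and \<gamma> :: "'a \<Rightarrow> 'r mult"
  assumes module_alg: "module_algebra \<Delta> act"
    and inner: "inner_action \<Delta> S act \<gamma>"
begin

lemma R_nondegenerate: "nondegenerate ((*) :: 'r \<Rightarrow> 'r \<Rightarrow> 'r)"
  using module_alg by (simp add: module_algebra_def)

lemma clinear_act_left: "clinear (\<lambda>a. act a x)"
  using module_alg by (simp add: module_algebra_def)

lemma clinear_act: "clinear (act a)"
  using module_alg by (simp add: module_algebra_def)

lemma act_inner: "fst (\<gamma> e) x = x \<Longrightarrow> act a x = tlift (\<lambda>p q. snd (\<gamma> (S q)) (fst (\<gamma> p) x)) (D3 \<Delta> a e)"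
  using inner by (simp add: inner_action_def)

lemma gamma_hom: "hom_to_mult (*) \<gamma>"
  using inner by (simp add: inner_action_def unital_hom_def)

lemma gamma_is_mult: "is_mult (*) (\<gamma> a)"
  using gamma_hom by (simp add: hom_to_mult_def)

lemma gamma_left_unital: "\<exists>ps. x = (\<Sum>(e, y)\<leftarrow>ps. fst (\<gamma> e) y)"
  using inner by (simp add: inner_action_def unital_hom_def)

lemma gamma_right_unital: "\<exists>ps. x = (\<Sum>(e, y)\<leftarrow>ps. snd (\<gamma> e) y)"
  using inner by (simp add: inner_action_def unital_hom_def)

lemma snd_gamma_scale: "snd (\<gamma> (c *\<^sub>C a)) x = c *\<^sub>C snd (\<gamma> a) x"
  using gamma_hom by (simp add: hom_to_mult_def mscale_def)

lemma clinear_snd_gamma_hom: "clinear (\<lambda>a. snd (\<gamma> a) x)"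
  using gamma_hom by (intro clinearI) (simp_all add: hom_to_mult_def madd_def mscale_def)

lemma clinear_fst_gamma_hom: "clinear (\<lambda>a. fst (\<gamma> a) x)"
  using gamma_hom by (intro clinearI) (simp_all add: hom_to_mult_def madd_def mscale_def)

lemma clinear_snd_gamma: "clinear (snd (\<gamma> a))"
  by (rule is_mult_clinear_snd[OF R_nondegenerate cbilinear_times gamma_is_mult])

lemma clinear_fst_gamma: "clinear (fst (\<gamma> a))"
  by (rule is_mult_clinear_fst[OF R_nondegenerate cbilinear_times gamma_is_mult])

lemma snd_gamma_mult: "snd (\<gamma> (a * b)) x = snd (\<gamma> b) (snd (\<gamma> a) x)"
  using gamma_hom by (simp add: hom_to_mult_def mcomp_def)

lemma fst_gamma_mult: "fst (\<gamma> (a * b)) x = fst (\<gamma> a) (fst (\<gamma> b) x)"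
  using gamma_hom by (simp add: hom_to_mult_def mcomp_def)

lemma fst_snd_gamma_commute: "fst (\<gamma> a) (snd (\<gamma> b) x) = snd (\<gamma> b) (fst (\<gamma> a) x)"
  by (rule is_mult_fst_snd_commute[OF R_nondegenerate cbilinear_times gamma_is_mult gamma_is_mult])

lemma snd_gamma_mult_left: "snd (\<gamma> a) (x * z) = x * snd (\<gamma> a) z"
  using gamma_is_mult by (simp add: is_mult_def)

lemma snd_gamma_mult_fst: "snd (\<gamma> a) x * z = x * fst (\<gamma> a) z"
  using gamma_is_mult by (simp add: is_mult_def)

lemmas clinear_intros = clinear_ident clinear_tlift_fun clinear_tlift_comp cbilinearI
  clinear_tens_right_comp clinear_tens_left_comp clinear_mult_left_comp clinear_mult_right_comp
  clinear_compose[OF clinear_snd_gamma] clinear_compose[OF clinear_fst_gamma]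
  clinear_compose[OF clinear_snd_gamma_hom] clinear_compose[OF clinear_fst_gamma_hom]
  clinear_compose[OF clinear_antipode] clinear_compose[OF clinear_act_left] clinear_compose[OF clinear_act]
  clinear_compose[OF clinear_D1_left] clinear_compose[OF clinear_D1_right]

text \<open>From \<open>\<gamma>(A)R = R\<close> every \<open>y\<close> is a finite sum \<open>\<Sum> \<gamma>(e\<^sub>i) z\<^sub>i\<close>; a single \<open>e\<close> with
  \<open>\<gamma>(e) y = y\<close> is obtained by separating \<open>y\<close> from the subspace \<open>\<gamma>(A) y\<close> and applying the
  local-unit property of functionals to \<open>a \<mapsto> \<omega>(\<gamma>(a) z\<^sub>i)\<close>.\<close>

lemma gamma_local_unit: "\<exists>e. fst (\<gamma> e) y = y"
proof (rule ccontr)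
  assume no_unit: "\<nexists>e. fst (\<gamma> e) y = y"
  define V where "V = range (\<lambda>e. fst (\<gamma> e) y)"
  have "cv.subspace V"
    unfolding V_def by (rule subspace_range_clinear[OF clinear_fst_gamma_hom])
  moreover have "y \<notin> V" using no_unit unfolding V_def by (metis (mono_tags, lifting) imageE)
  ultimately obtain \<omega> :: "'r \<Rightarrow> complex" where \<omega>: "clinear \<omega>" "\<omega> y = 1" "\<And>v. v \<in> V \<Longrightarrow> \<omega> v = 0"
    using subspace_separating_functional by blast
  obtain ps where y: "y = (\<Sum>(e, z)\<leftarrow>ps. fst (\<gamma> e) z)" using gamma_left_unital by blast
  define xs where "xs = map (\<lambda>p. ((\<lambda>a. \<omega> (fst (\<gamma> a) (snd p))), fst p)) ps"
  have sum_ps: "L (\<Sum>(e, z)\<leftarrow>ps. fst (\<gamma> e) z) = (\<Sum>p\<leftarrow>ps. L (fst (\<gamma> (fst p)) (snd p)))" if "clinear L" for L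
    by (induction ps) (auto simp: clinear_zero[OF that] clinear_add[OF that])
  have "(\<Sum>p\<leftarrow>xs. fst p (snd p)) = 0"
  proof (rule sum_functionals_eq_0_if_left_mult)
    show "clinear (fst p)" if "p \<in> set xs" for p
      using that by (auto simp: xs_def intro: clinear_compose[OF \<omega>(1) clinear_fst_gamma_hom])
    fix e
    have "(\<Sum>p\<leftarrow>xs. fst p (e * snd p)) = (\<Sum>p\<leftarrow>ps. \<omega> (fst (\<gamma> e) (fst (\<gamma> (fst p)) (snd p))))"
      by (simp add: xs_def fst_gamma_mult o_def)
    also have "\<dots> = \<omega> (fst (\<gamma> e) y)"
      using sum_ps[OF clinear_compose[OF \<omega>(1) clinear_fst_gamma]] y by simp
    also have "\<dots> = 0" by (rule \<omega>(3)) (simp add: V_def)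
    finally show "(\<Sum>p\<leftarrow>xs. fst p (e * snd p)) = 0" .
  qed
  moreover have "(\<Sum>p\<leftarrow>xs. fst p (snd p)) = \<omega> y"
    using sum_ps[OF \<omega>(1)] y by (simp add: xs_def o_def)
  ultimately show False using \<omega>(2) by simp
qed

text \<open>The consequence of innerness that is used: \<open>(u\<^sub>(\<^sub>1\<^sub>) y) \<gamma>(u\<^sub>(\<^sub>2\<^sub>) w) = \<gamma>(u) y \<gamma>(w)\<close>.
  With a local unit \<open>\<gamma>(f) y = y\<close> the left side is
  \<open>\<gamma>(u\<^sub>(\<^sub>1\<^sub>) f) y \<gamma>(S(u\<^sub>(\<^sub>2\<^sub>)) u\<^sub>(\<^sub>3\<^sub>) w)\<close>, which collapses by the antipode identity.\<close>

lemma act_gamma_D1: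
  assumes unit: "fst (\<gamma> f) y = y"
  shows "tlift (\<lambda>\<alpha> \<beta>. snd (\<gamma> \<beta>) (act \<alpha> y)) (D1 \<Delta> u w) = snd (\<gamma> w) (fst (\<gamma> u) y)"
proof -
  have \<phi>: "cbilinear (\<lambda>a b. snd (\<gamma> b) (fst (\<gamma> a) y))"
    by (intro clinear_intros clinear_snd_gamma_hom clinear_fst_gamma_hom)
  have "tlift (\<lambda>\<alpha> \<beta>. snd (\<gamma> \<beta>) (act \<alpha> y)) (D1 \<Delta> u w)
      = tlift (\<lambda>\<alpha> \<beta>. tlift (\<lambda>a b. snd (\<gamma> (S b * \<beta>)) (fst (\<gamma> a) y)) (D3 \<Delta> \<alpha> f)) (D1 \<Delta> u w)"
    by (simp add: act_inner[OF unit] tlift_fun_linear[OF clinear_snd_gamma] snd_gamma_mult)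
  also have "\<dots> = tlift (\<lambda>a b. snd (\<gamma> b) (fst (\<gamma> a) y))
      (tlift (\<lambda>\<alpha> \<beta>. tlift (\<lambda>a b. a \<otimes> (S b * \<beta>)) (D3 \<Delta> \<alpha> f)) (D1 \<Delta> u w))"
    by (simp add: tlift_fun_linear[OF clinear_tlift[OF \<phi>]] tlift_tens[OF \<phi>])
  also have "\<dots> = snd (\<gamma> w) (fst (\<gamma> u) y)"
    by (simp add: antipode_D3_D1 tlift_tens[OF \<phi>] fst_gamma_mult unit)
  finally show ?thesis .
qed

section \<open>The twisting map\<close>

text \<open>In \<open>twist x a = \<Sum> x \<gamma>(a\<^sub>(\<^sub>1\<^sub>)) \<otimes> a\<^sub>(\<^sub>2\<^sub>)\<close> the leg \<open>a\<^sub>(\<^sub>1\<^sub>)\<close> is not covered, so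
  \<open>twist x a\<close> is characterised by its products \<open>twist_cov x a b\<close> with \<open>1 \<otimes> b\<close>.  It exists because \<open>x\<close> is a sum of elements \<open>y \<gamma>(e)\<close>, and for these
  \<open>twist_gamma e y a = \<Sum> y \<gamma>(e a\<^sub>(\<^sub>1\<^sub>)) \<otimes> a\<^sub>(\<^sub>2\<^sub>)\<close> is computed from \<open>(e \<otimes> 1)\<Delta>(a)\<close>.\<close>

definition twist_cov :: "'r \<Rightarrow> 'a \<Rightarrow> 'a \<Rightarrow> ('r, 'a) tensor" where
  "twist_cov x a b = tlift (\<lambda>p q. snd (\<gamma> p) x \<otimes> q) (D1 \<Delta> a b)"

definition twist_gamma :: "'a \<Rightarrow> 'r \<Rightarrow> 'a \<Rightarrow> ('r, 'a) tensor" where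
  "twist_gamma e y a = tlift (\<lambda>p q. snd (\<gamma> p) y \<otimes> q) (D2 \<Delta> e a)"

lemma cbilinear_gamma_tens: "cbilinear (\<lambda>p q. snd (\<gamma> p) x \<otimes> q)"
  by (intro clinear_intros clinear_snd_gamma_hom)

lemma clinear_twist_cov_left: "clinear (\<lambda>x. twist_cov x a b)"
  unfolding twist_cov_def by (intro clinear_intros)

lemma clinear_twist_cov_mid: "clinear (\<lambda>a. twist_cov x a b)"
  unfolding twist_cov_def by (intro clinear_intros clinear_snd_gamma_hom)

lemma cbilinear_twist_cov: "cbilinear (\<lambda>x a. twist_cov x a b)"
  by (simp add: cbilinear_def clinear_twist_cov_left clinear_twist_cov_mid)

lemma rmult2_twist_gamma: "rmult2 b (twist_gamma e y a) = twist_cov (snd (\<gamma> e) y) a b"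
proof -
  have "rmult2 b (twist_gamma e y a) = tlift (\<lambda>p q. snd (\<gamma> p) y \<otimes> q) (rmult2 b (D2 \<Delta> e a))"
    by (simp add: twist_gamma_def tlift_fun_linear[OF clinear_rmult2] tlift_rmult2[OF cbilinear_gamma_tens])
  also have "\<dots> = twist_cov (snd (\<gamma> e) y) a b"
    by (simp add: lmult1_D1[symmetric] tlift_lmult1[OF cbilinear_gamma_tens] twist_cov_def snd_gamma_mult)
  finally show ?thesis .
qed

lemma twist_exists: "\<exists>u. \<forall>b. rmult2 b u = twist_cov x a b"
proof -
  obtain ps where x: "x = (\<Sum>(e, y)\<leftarrow>ps. snd (\<gamma> e) y)" using gamma_right_unital by blast
  have "\<exists>u. \<forall>b. rmult2 b u = twist_cov (\<Sum>(e, y)\<leftarrow>ps. snd (\<gamma> e) y) a b" for ps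
  proof (induction ps)
    case Nil
    show ?case
      by (rule exI[of _ 0]) (simp add: clinear_zero[OF clinear_rmult2] clinear_zero[OF clinear_twist_cov_left])
  next
    case (Cons p ps)
    obtain e y where p: "p = (e, y)" by (cases p) auto
    obtain u where u: "\<forall>b. rmult2 b u = twist_cov (\<Sum>(e, y)\<leftarrow>ps. snd (\<gamma> e) y) a b" using Cons by blast
    show ?case
      by (rule exI[of _ "twist_gamma e y a + u"])
         (simp add: p u rmult2_twist_gamma clinear_add[OF clinear_rmult2] clinear_add[OF clinear_twist_cov_left])
  qed
  then show ?thesis using x by simp
qed

definition twist :: "'r \<Rightarrow> 'a \<Rightarrow> ('r, 'a) tensor" where
  "twist x a = (SOME u. \<forall>b. rmult2 b u = twist_cov x a b)"

lemma rmult2_twist: "rmult2 b (twist x a) = twist_cov x a b"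
  using someI_ex[OF twist_exists[of x a]] unfolding twist_def by blast

lemma twist_eqI: "(\<And>b. rmult2 b u = twist_cov x a b) \<Longrightarrow> twist x a = u"
  by (rule tensor_eq_by_rmult2[OF A_nondegenerate]) (simp add: rmult2_twist)

lemma twist_gamma_eq: "twist (snd (\<gamma> e) y) a = twist_gamma e y a"
  by (rule twist_eqI) (simp add: rmult2_twist_gamma)

lemma cbilinear_twist: "cbilinear twist"
proof (rule cbilinearI; rule clinearI)
  show "twist x (a + a') = twist x a + twist x a'" for x a a'
    by (rule twist_eqI) (simp add: clinear_add[OF clinear_rmult2] rmult2_twist clinear_add[OF clinear_twist_cov_mid])
  show "twist x (c *\<^sub>C a) = c *\<^sub>C twist x a" for x c a
    by (rule twist_eqI) (simp add: clinear_scale[OF clinear_rmult2] rmult2_twist clinear_scale[OF clinear_twist_cov_mid])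
  show "twist (x + x') a = twist x a + twist x' a" for x x' a
    by (rule twist_eqI) (simp add: clinear_add[OF clinear_rmult2] rmult2_twist clinear_add[OF clinear_twist_cov_left])
  show "twist (c *\<^sub>C x) a = c *\<^sub>C twist x a" for c x a
    by (rule twist_eqI) (simp add: clinear_scale[OF clinear_rmult2] rmult2_twist clinear_scale[OF clinear_twist_cov_left])
qed

definition twist_map :: "('r, 'a) tensor \<Rightarrow> ('r, 'a) tensor" where
  "twist_map = tlift twist"

lemma clinear_twist_map: "clinear twist_map"
  unfolding twist_map_def by (rule clinear_tlift[OF cbilinear_twist])

lemma twist_map_tens: "twist_map (x \<otimes> a) = twist x a"
  unfolding twist_map_def by (rule tlift_tens[OF cbilinear_twist])

lemma rmult2_twist_map: "rmult2 b (twist_map t) = tlift (\<lambda>x a. twist_cov x a b) t"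
  by (simp add: twist_map_def tlift_fun_linear[OF clinear_rmult2] rmult2_twist)

lemma clinear_eq_on_right_gamma:
  assumes "clinear F" "clinear G" "\<And>e y. F (snd (\<gamma> e) y) = G (snd (\<gamma> e) y)"
  shows "F x = G x"
proof -
  obtain ps where x: "x = (\<Sum>(e, y)\<leftarrow>ps. snd (\<gamma> e) y)" using gamma_right_unital by blast
  have "F (\<Sum>(e, y)\<leftarrow>ps. snd (\<gamma> e) y) = G (\<Sum>(e, y)\<leftarrow>ps. snd (\<gamma> e) y)" for ps
    by (induction ps) (auto simp: clinear_zero[OF assms(1)] clinear_zero[OF assms(2)] clinear_add[OF assms(1)]
        clinear_add[OF assms(2)] assms(3))
  then show ?thesis using x by simp
qed

section \<open>The inverse of the twisting map\<close>

text \<open>\<open>untwist_cov b t = \<Psi>(t)(1 \<otimes> b)\<close> for the inverse \<open>\<Psi>(x \<otimes> a) = \<Sum> x \<gamma>(S(a\<^sub>(\<^sub>1\<^sub>))) \<otimes> a\<^sub>(\<^sub>2\<^sub>)\<close>.\<close>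

definition untwist_cov :: "'a \<Rightarrow> ('r, 'a) tensor \<Rightarrow> ('r, 'a) tensor" where
  "untwist_cov b = tlift (\<lambda>z q. tlift (\<lambda>r s. snd (\<gamma> (S r)) z \<otimes> s) (D1 \<Delta> q b))"

lemma cbilinear_untwist_cov_inner: "cbilinear (\<lambda>z q. tlift (\<lambda>r s. snd (\<gamma> (S r)) z \<otimes> s) (D1 \<Delta> q b))"
  by (intro clinear_intros clinear_snd_gamma_hom)

lemma clinear_untwist_cov: "clinear (untwist_cov b)"
  unfolding untwist_cov_def by (rule clinear_tlift[OF cbilinear_untwist_cov_inner])

text \<open>On \<open>y \<gamma>(e) \<otimes> a\<close>: \<open>\<Sum> y \<gamma>(e a\<^sub>(\<^sub>1\<^sub>) S(a\<^sub>(\<^sub>2\<^sub>))) \<otimes> a\<^sub>(\<^sub>3\<^sub>) b = y \<gamma>(e) \<otimes> a b\<close> by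
  coassociativity, the antipode and the counit.\<close>

lemma untwist_cov_twist_map_gamma: "untwist_cov b (twist_map (snd (\<gamma> e) y \<otimes> a)) = rmult2 b (snd (\<gamma> e) y \<otimes> a)"
proof -
  have \<phi>: "cbilinear (\<lambda>p r. snd (\<gamma> (p * S r)) y)"
    by (intro clinear_intros clinear_snd_gamma_hom clinear_rmult)
  define \<Theta> where "\<Theta> = (\<lambda>(X::('a, 'a) tensor) (s::'a). tlift (\<lambda>p r. snd (\<gamma> (p * S r)) y) X \<otimes> s)"
  have \<Theta>: "cbilinear \<Theta>" unfolding \<Theta>_def by (intro clinear_intros clinear_tlift[OF \<phi>])
  have "untwist_cov b (twist_map (snd (\<gamma> e) y \<otimes> a))
      = tlift (\<lambda>p q. tlift (\<lambda>r s. snd (\<gamma> (p * S r)) y \<otimes> s) (D1 \<Delta> q b)) (D2 \<Delta> e a)"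
    by (simp add: twist_map_tens twist_gamma_eq twist_gamma_def untwist_cov_def
        tlift_fun_linear[OF clinear_tlift[OF cbilinear_untwist_cov_inner]]
        tlift_tens[OF cbilinear_untwist_cov_inner] snd_gamma_mult)
  also have "\<dots> = tlift \<Theta> (tlift (\<lambda>u v. tlift (\<lambda>y z. (u \<otimes> y) \<otimes> z) (D1 \<Delta> v b)) (D2 \<Delta> e a))"
    by (simp add: tlift_fun_linear[OF clinear_tlift[OF \<Theta>]] tlift_tens[OF \<Theta>])
       (simp add: \<Theta>_def tlift_tens[OF \<phi>])
  also have "\<dots> = tlift (\<lambda>p q. snd (\<gamma> (tlift (\<lambda>p' r. p' * S r) (D2 \<Delta> e p))) y \<otimes> q) (D1 \<Delta> a b)"
    by (simp add: coassoc_D2_D1[symmetric] tlift_tlift_tens[OF \<Theta>])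
       (simp add: \<Theta>_def tlift_fun_linear[OF clinear_snd_gamma_hom])
  also have "\<dots> = tlift (\<lambda>p q. snd (\<gamma> e) y \<otimes> (counit p *\<^sub>C q)) (D1 \<Delta> a b)"
    by (simp add: antipode_D2 snd_gamma_scale tens_scale_left tens_scale_right)
  also have "\<dots> = snd (\<gamma> e) y \<otimes> (a * b)"
    by (simp add: tlift_fun_linear[OF clinear_tens_right, symmetric] counit_D1)
  finally show ?thesis by simp
qed

lemma untwist_cov_twist_map: "untwist_cov b (twist_map t) = rmult2 b t"
proof (rule clinear_tensor_eqI[OF clinear_compose[OF clinear_untwist_cov clinear_twist_map] clinear_rmult2])
  fix x a
  show "untwist_cov b (twist_map (x \<otimes> a)) = rmult2 b (x \<otimes> a)"
    by (rule clinear_eq_on_right_gamma[where F="\<lambda>x. untwist_cov b (twist_map (x \<otimes> a))" and G="\<lambda>x. rmult2 b (x \<otimes> a)"])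
       (simp_all add: clinear_compose[OF clinear_untwist_cov clinear_compose[OF clinear_twist_map clinear_tens_left]]
         clinear_compose[OF clinear_rmult2 clinear_tens_left] clinear_tens_left untwist_cov_twist_map_gamma)
qed

lemma inj_twist_map: "inj twist_map"
proof (rule injI)
  fix s t assume st: "twist_map s = twist_map t"
  show "s = t"
  proof (rule tensor_eq_by_rmult2[OF A_nondegenerate])
    show "rmult2 b s = rmult2 b t" for b
      using untwist_cov_twist_map[of b s] untwist_cov_twist_map[of b t] st by simp
  qed
qed

text \<open>Surjectivity uses that \<open>(e \<otimes> 1)\<Delta>(a)\<close> spans \<open>A \<otimes> A\<close>.\<close>

lemma twist_map_hits_gamma_tens: "\<exists>s. twist_map s = snd (\<gamma> p) y \<otimes> q"
proof -
  obtain w where w: "tlift (D2 \<Delta>) w = p \<otimes> q" using bij_D2 by (metis bij_pointE)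
  have "twist_map (tlift (\<lambda>e a. snd (\<gamma> e) y \<otimes> a) w) = tlift (\<lambda>e a. twist_gamma e y a) w"
    by (simp add: tlift_fun_linear[OF clinear_twist_map] twist_map_tens twist_gamma_eq)
  also have "\<dots> = tlift (\<lambda>p q. snd (\<gamma> p) y \<otimes> q) (tlift (D2 \<Delta>) w)"
    by (simp add: twist_gamma_def tlift_fun_linear[OF clinear_tlift[OF cbilinear_gamma_tens]])
  also have "\<dots> = snd (\<gamma> p) y \<otimes> q" by (simp add: w tlift_tens[OF cbilinear_gamma_tens])
  finally show ?thesis by blast
qed

lemma surj_twist_map: "surj twist_map"
proof -
  have hits_add: "\<exists>s. twist_map s = t1 + t2" if "\<exists>s. twist_map s = t1" "\<exists>s. twist_map s = t2" for t1 t2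
    using that clinear_add[OF clinear_twist_map] by metis
  have hits_sum: "\<exists>s. twist_map s = (\<Sum>(e, y)\<leftarrow>ps. snd (\<gamma> e) y) \<otimes> q" for ps q
  proof (induction ps)
    case Nil
    show ?case by (rule exI[of _ 0]) (simp add: clinear_zero[OF clinear_twist_map] tens_zero_left)
  next
    case (Cons p ps)
    then show ?case using hits_add twist_map_hits_gamma_tens by (cases p) (simp add: tens_add_left)
  qed
  have hits_tens: "\<exists>s. twist_map s = x \<otimes> q" for x q
  proof -
    obtain ps where "x = (\<Sum>(e, y)\<leftarrow>ps. snd (\<gamma> e) y)" using gamma_right_unital by blast
    then show ?thesis using hits_sum by simp
  qed
  have "\<exists>s. twist_map s = t" for t
  proof (induction t rule: tensor_induct)
    case zero
    show ?case by (rule exI[of _ 0]) (rule clinear_zero[OF clinear_twist_map])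
  next
    case (tens x y)
    show ?case by (rule hits_tens)
  next
    case (add s t)
    then show ?case by (rule hits_add)
  qed
  then show ?thesis by (metis surjI)
qed

lemma bij_twist_map: "bij twist_map"
  by (simp add: bij_def inj_twist_map surj_twist_map)

section \<open>Multiplicativity\<close>

lemma cbilinear_smash_inner: "cbilinear (\<lambda>x' a'. tlift (\<lambda>p q. (x * act p x') \<otimes> q) (D1 \<Delta> a a'))"
  by (intro clinear_intros clinear_act_left)

lemma smash_mul_tens: "smash_mul \<Delta> act (x \<otimes> a) (y \<otimes> c) = tlift (\<lambda>p q. (x * act p y) \<otimes> q) (D1 \<Delta> a c)"
proof -
  have \<phi>: "cbilinear (\<lambda>x a. tlift (\<lambda>x' a'. tlift (\<lambda>p q. (x * act p x') \<otimes> q) (D1 \<Delta> a a')) t)" for t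
    by (intro clinear_intros clinear_act_left)
  show ?thesis
    unfolding smash_mul_def by (simp only: tlift_tens[OF \<phi>]) (simp add: tlift_tens[OF cbilinear_smash_inner])
qed

lemma clinear_smash_mul_left: "clinear (\<lambda>s. smash_mul \<Delta> act s t)"
  unfolding smash_mul_def by (intro clinear_tlift clinear_intros clinear_act_left)

lemma clinear_smash_mul_right: "clinear (\<lambda>t. smash_mul \<Delta> act s t)"
  unfolding smash_mul_def by (intro clinear_tlift_fun clinear_tlift[OF cbilinear_smash_inner])

lemma act_gamma_D1_D1:
  assumes unit: "fst (\<gamma> f) y = y"
  shows "tlift (\<lambda>p q. tlift (\<lambda>\<alpha> \<beta>. snd (\<gamma> \<alpha>) (act p y) \<otimes> \<beta>) (D1 \<Delta> q b)) (D1 \<Delta> a c) =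
    tlift (\<lambda>g d. tlift (\<lambda>u v. snd (\<gamma> g) (fst (\<gamma> u) y) \<otimes> v) (D1 \<Delta> a d)) (D1 \<Delta> c b)"
proof -
  have \<phi>: "cbilinear (\<lambda>p \<alpha>. snd (\<gamma> \<alpha>) (act p y))"
    by (intro clinear_intros clinear_snd_gamma_hom clinear_act_left)
  define \<Theta> where "\<Theta> = (\<lambda>(X::('a, 'a) tensor) (\<delta>::'a). tlift (\<lambda>p \<alpha>. snd (\<gamma> \<alpha>) (act p y)) X \<otimes> \<delta>)"
  have \<Theta>: "cbilinear \<Theta>" unfolding \<Theta>_def by (intro clinear_intros clinear_tlift[OF \<phi>])
  have "tlift (\<lambda>p q. tlift (\<lambda>\<alpha> \<beta>. snd (\<gamma> \<alpha>) (act p y) \<otimes> \<beta>) (D1 \<Delta> q b)) (D1 \<Delta> a c)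
      = tlift \<Theta> (tlift (\<lambda>q r. tlift (\<lambda>y z. (q \<otimes> y) \<otimes> z) (D1 \<Delta> r b)) (D1 \<Delta> a c))"
    by (simp add: tlift_fun_linear[OF clinear_tlift[OF \<Theta>]] tlift_tens[OF \<Theta>])
       (simp add: \<Theta>_def tlift_tens[OF \<phi>])
  also have "\<dots> = tlift \<Theta> (tlift (\<lambda>g d. tlift (\<lambda>u v. D1 \<Delta> u g \<otimes> v) (D1 \<Delta> a d)) (D1 \<Delta> c b))"
    by (simp add: coassoc_D1_D1)
  also have "\<dots> = tlift (\<lambda>g d. tlift (\<lambda>u v. snd (\<gamma> g) (fst (\<gamma> u) y) \<otimes> v) (D1 \<Delta> a d)) (D1 \<Delta> c b)"
    by (simp add: tlift_fun_linear[OF clinear_tlift[OF \<Theta>]] tlift_tens[OF \<Theta>])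
       (simp add: \<Theta>_def act_gamma_D1[OF unit])
  finally show ?thesis .
qed

lemma twist_map_smash_mul_tens:
  "twist_map (smash_mul \<Delta> act (x \<otimes> a) (y \<otimes> c)) = tmul (twist_map (x \<otimes> a)) (twist_map (y \<otimes> c))"
proof (rule tensor_eq_by_rmult2[OF A_nondegenerate])
  fix b
  obtain f where unit: "fst (\<gamma> f) y = y" using gamma_local_unit by blast
  have "rmult2 b (twist_map (smash_mul \<Delta> act (x \<otimes> a) (y \<otimes> c))) =
      tlift (\<lambda>p q. tlift (\<lambda>\<alpha> \<beta>. snd (\<gamma> \<alpha>) (x * act p y) \<otimes> \<beta>) (D1 \<Delta> q b)) (D1 \<Delta> a c)"
    by (simp add: smash_mul_tens rmult2_twist_map tlift_tlift_tens[OF cbilinear_twist_cov]) (simp add: twist_cov_def)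
  also have "\<dots> = lmult1 x (tlift (\<lambda>p q. tlift (\<lambda>\<alpha> \<beta>. snd (\<gamma> \<alpha>) (act p y) \<otimes> \<beta>) (D1 \<Delta> q b)) (D1 \<Delta> a c))"
    by (simp add: tlift_fun_linear[OF clinear_lmult1] snd_gamma_mult_left)
  also have "\<dots> = lmult1 x (tlift (\<lambda>g d. tlift (\<lambda>u v. snd (\<gamma> g) (fst (\<gamma> u) y) \<otimes> v) (D1 \<Delta> a d)) (D1 \<Delta> c b))"
    by (simp add: act_gamma_D1_D1[OF unit])
  also have "\<dots> = tlift (\<lambda>g d. tlift (\<lambda>u v. (snd (\<gamma> u) x * snd (\<gamma> g) y) \<otimes> v) (D1 \<Delta> a d)) (D1 \<Delta> c b)"
    by (simp add: tlift_fun_linear[OF clinear_lmult1] snd_gamma_mult_fst fst_snd_gamma_commute)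
  also have "\<dots> = tlift (\<lambda>g d. rmult1 (snd (\<gamma> g) y) (rmult2 d (twist x a))) (D1 \<Delta> c b)"
    by (simp add: rmult2_twist twist_cov_def tlift_fun_linear[OF clinear_rmult1])
  also have "\<dots> = tmul (twist x a) (twist_cov y c b)"
    by (simp add: twist_cov_def tlift_fun_linear[OF clinear_tmul_right] tmul_tens_right)
  also have "\<dots> = rmult2 b (tmul (twist_map (x \<otimes> a)) (twist_map (y \<otimes> c)))"
    by (simp add: twist_map_tens tmul_rmult2[symmetric] rmult2_twist)
  finally show "rmult2 b (twist_map (smash_mul \<Delta> act (x \<otimes> a) (y \<otimes> c))) =
      rmult2 b (tmul (twist_map (x \<otimes> a)) (twist_map (y \<otimes> c)))" .
qed

lemma twist_map_smash_mul: "twist_map (smash_mul \<Delta> act s t) = tmul (twist_map s) (twist_map t)"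
  by (rule cbilinear_tensor_eqI[where F="\<lambda>s t. twist_map (smash_mul \<Delta> act s t)" and G="\<lambda>s t. tmul (twist_map s) (twist_map t)"])
     (simp_all add: clinear_compose[OF clinear_twist_map clinear_smash_mul_right]
       clinear_compose[OF clinear_tmul_right clinear_twist_map] clinear_compose[OF clinear_twist_map clinear_smash_mul_left]
       clinear_compose[OF clinear_tmul_left clinear_twist_map] twist_map_smash_mul_tens)

end

theorem proposition5p12:
  fixes \<Delta> :: "'a::calg \<Rightarrow> ('a, 'a) tensor mult"
    and S :: "'a \<Rightarrow> 'a"
    and act :: "'a \<Rightarrow> 'r::calg \<Rightarrow> 'r"
    and \<gamma> :: "'a \<Rightarrow> 'r mult"
  assumes "regular_mult_hopf \<Delta>"
    and "is_antipode \<Delta> S"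
    and "module_algebra \<Delta> act"
    and "inner_action \<Delta> S act \<gamma>"
  shows "\<exists>\<Phi> :: ('r, 'a) tensor \<Rightarrow> ('r, 'a) tensor.
           clinear \<Phi> \<and> bij \<Phi> \<and> (\<forall>s t. \<Phi> (smash_mul \<Delta> act s t) = tmul (\<Phi> s) (\<Phi> t))"
proof -
  interpret inner_action_setting \<Delta> S act \<gamma>
    by unfold_locales (fact assms)+
  show ?thesis
    using clinear_twist_map bij_twist_map twist_map_smash_mul by blast
qed

end
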